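(* Let $\mathcal M$ be an MDP and $(\star)$ a relational reachability property whose comparison operator is $\approx_\epsilon$ for some $\epsilon\ge 0$. For each $c\in\mathsf{Comb}$ and $\mathrm{opt}\in\{\max,\min\}$ let $v^{\mathrm{opt}}_c=\mathrm{opt}_{\sigma\in\Sigma^{\mathcal M_c}}\mathbb E^{\mathcal M_c,\sigma}_{s_c}(\mathit{rew}_c)$ and $v^{\mathrm{opt}}=\sum_{c\in\mathsf{Comb}}v^{\mathrm{opt}}_c$. Then $(\star)$ holds in $\mathcal M$ (over general schedulers) if and only if $q_{m+1}\in[v^{\min}-\epsilon,\,v^{\max}+\epsilon]$.
   Context: An MDP is $\mathcal M=(S,\mathrm{Act},P)$ with $S,\mathrm{Act}$ finite non-empty, each state having a non-empty set of enabled actions $\alpha$ with $\sum_{s'}P(s,\alpha,s')=1$ (and $\sum_{s'}P(s,\alpha,s')=0$ for others). General schedulers map finite paths to distributions over enabled actions of the last state; $\Sigma^{\mathcal M}$ is the set of them; $\Pr^\sigma_s(\Diamond T)$ is the probability of reaching $T$ from $s$ under $\sigma$. $(\star)$ is $\exists \sigma_1,\ldots,\sigma_n\in\Sigma^{\mathcal M}.~ \sum_{i=1}^{m} q_i \Pr^{\sigma_{k_i}}_{s_i}(\Diamond T_i)\ \mathsf{comp}\ q_{m+1}$ with rational $q_i$, states $s_i$, target sets $T_i\subseteq S$, $\{k_1,\dots,k_m\}=\{1,\dots,n\}$; $r\approx_\epsilon r'$ means $|r-r'|\le\epsilon$. $\mathsf{Comb}=\{(s_i,k_i)\mid 1\le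 i\le m\}$, $\mathit{ind}(c)=\{i\mid (s_i,k_i)=c\}$, $\mathcal T_c=\{T_i\mid i\in\mathit{ind}(c)\}$. Goal unfolding $\mathcal M_c$: states $S\times 2^{\mathcal T_c}$, actions $\mathrm{Act}$, $P_c((s,\mathcal T),\alpha,(s',\mathcal T'))=P(s,\alpha,s')$ if $\mathcal T'=\mathcal T\cup\{T\in\mathcal T_c\mid s\in T\}$ and $0$ otherwise; $s_c=(s,\emptyset)$ for $c=(s,k)$. Reward $\mathit{rew}_c=\sum_{T\in\mathcal T_c}q_T\mathit{rew}_T$ with $q_T=\sum_{i\in\mathit{ind}(c),T_i=T}q_i$, $\mathit{rew}_T(s,\mathcal T)=1$ if $s\in T$ and $T\notin\mathcal T$, else $0$. $\mathbb E^{\mathcal M_c,\sigma}_{s_c}(\mathit{rew}_c)$ is the expected total reward along paths from $s_c$ under $\sigma$. *)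

theory Defs
  imports Complex_Main
begin

definition is_mdp :: "'s set \<Rightarrow> 'a set \<Rightarrow> ('s \<Rightarrow> 'a \<Rightarrow> 's \<Rightarrow> real) \<Rightarrow> bool" where
  "is_mdp S Act P \<longleftrightarrow>
     finite S \<and> S \<noteq> {} \<and> finite Act \<and> Act \<noteq> {} \<and>
     (\<forall>s\<in>S. \<forall>\<alpha>\<in>Act. \<forall>s'. P s \<alpha> s' \<ge> 0 \<and> (s' \<notin> S \<longrightarrow> P s \<alpha> s' = 0)) \<and>
     (\<forall>s\<in>S. \<forall>\<alpha>\<in>Act. (\<Sum>s'\<in>S. P s \<alpha> s') = 1 \<or> (\<Sum>s'\<in>S. P s \<alpha> s') = 0) \<and>
     (\<forall>s\<in>S. \<exists>\<alpha>\<in>Act. (\<Sum>s'\<in>S. P s \<alpha> s') = 1)"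

definition enabled :: "'s set \<Rightarrow> 'a set \<Rightarrow> ('s \<Rightarrow> 'a \<Rightarrow> 's \<Rightarrow> real) \<Rightarrow> 's \<Rightarrow> 'a set" where
  "enabled S Act P s = {\<alpha>\<in>Act. (\<Sum>s'\<in>S. P s \<alpha> s') = 1}"

text \<open>A finite path s0 alpha0 s1 ... alpha(k-1) sk is represented by its start state s0
  and the list of steps [(alpha0,s1),...,(alpha(k-1),sk)].\<close>

definition last_state :: "'s \<Rightarrow> ('a \<times> 's) list \<Rightarrow> 's" where
  "last_state s0 h = (if h = [] then s0 else snd (last h))"

type_synonym ('s,'a) sched = "'s \<Rightarrow> ('a \<times> 's) list \<Rightarrow> 'a \<Rightarrow> real"

definition is_sched :: "'s set \<Rightarrow> 'a set \<Rightarrow> ('s \<Rightarrow> 'a \<Rightarrow> 's \<Rightarrow> real) \<Rightarrow> ('s,'a) sched \<Rightarrow> bool" where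
  "is_sched S Act P \<sigma> \<longleftrightarrow>
     (\<forall>s0 h. s0 \<in> S \<and> set h \<subseteq> Act \<times> S \<longrightarrow>
        (\<forall>\<alpha>. \<sigma> s0 h \<alpha> \<ge> 0) \<and>
        (\<forall>\<alpha>. \<alpha> \<notin> enabled S Act P (last_state s0 h) \<longrightarrow> \<sigma> s0 h \<alpha> = 0) \<and>
        (\<Sum>\<alpha>\<in>enabled S Act P (last_state s0 h). \<sigma> s0 h \<alpha>) = 1)"

definition scheds :: "'s set \<Rightarrow> 'a set \<Rightarrow> ('s \<Rightarrow> 'a \<Rightarrow> 's \<Rightarrow> real) \<Rightarrow> ('s,'a) sched set" where
  "scheds S Act P = {\<sigma>. is_sched S Act P \<sigma>}"

text \<open>Probability of the cylinder of a finite path (prefix h already traversed).\<close>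

fun pp :: "('s \<Rightarrow> 'a \<Rightarrow> 's \<Rightarrow> real) \<Rightarrow> ('s,'a) sched \<Rightarrow> 's \<Rightarrow> ('a \<times> 's) list \<Rightarrow> ('a \<times> 's) list \<Rightarrow> real" where
  "pp P \<sigma> s0 h [] = 1"
| "pp P \<sigma> s0 h ((\<alpha>, t) # rest) =
     \<sigma> s0 h \<alpha> * P (last_state s0 h) \<alpha> t * pp P \<sigma> s0 (h @ [(\<alpha>, t)]) rest"

definition path_prob :: "('s \<Rightarrow> 'a \<Rightarrow> 's \<Rightarrow> real) \<Rightarrow> ('s,'a) sched \<Rightarrow> 's \<Rightarrow> ('a \<times> 's) list \<Rightarrow> real" where
  "path_prob P \<sigma> s0 h = pp P \<sigma> s0 [] h"

definition paths_len :: "'s set \<Rightarrow> 'a set \<Rightarrow> nat \<Rightarrow> ('a \<times> 's) list set" where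
  "paths_len S Act n = {h. length h = n \<and> set h \<subseteq> Act \<times> S}"

definition visits :: "'s \<Rightarrow> ('a \<times> 's) list \<Rightarrow> 's set \<Rightarrow> bool" where
  "visits s0 h T \<longleftrightarrow> s0 \<in> T \<or> (\<exists>x\<in>set h. snd x \<in> T)"

definition reach_prob :: "'s set \<Rightarrow> 'a set \<Rightarrow> ('s \<Rightarrow> 'a \<Rightarrow> 's \<Rightarrow> real) \<Rightarrow> ('s,'a) sched \<Rightarrow> 's \<Rightarrow> 's set \<Rightarrow> real" where
  "reach_prob S Act P \<sigma> s T =
     lim (\<lambda>n. \<Sum>h\<in>{h\<in>paths_len S Act n. visits s h T}. path_prob P \<sigma> s h)"

definition exp_total_rew :: "'s set \<Rightarrow> 'a set \<Rightarrow> ('s \<Rightarrow> 'a \<Rightarrow> 's \<Rightarrow> real) \<Rightarrow> ('s,'a) sched \<Rightarrow> 's \<Rightarrow> ('s \<Rightarrow> real) \<Rightarrow> real" where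
  "exp_total_rew S Act P \<sigma> s rew =
     lim (\<lambda>n. \<Sum>h\<in>paths_len S Act n. path_prob P \<sigma> s h * (rew s + (\<Sum>x\<leftarrow>h. rew (snd x))))"

text \<open>The property is given by m, n, coefficients q 1..q (m+1), states s 1..s m,
  targets T 1..T m and scheduler indices k 1..k m.\<close>

definition Comb :: "nat \<Rightarrow> (nat \<Rightarrow> 's) \<Rightarrow> (nat \<Rightarrow> nat) \<Rightarrow> ('s \<times> nat) set" where
  "Comb m s k = (\<lambda>i. (s i, k i)) ` {1..m}"

definition ind :: "nat \<Rightarrow> (nat \<Rightarrow> 's) \<Rightarrow> (nat \<Rightarrow> nat) \<Rightarrow> 's \<times> nat \<Rightarrow> nat set" where
  "ind m s k c = {i\<in>{1..m}. (s i, k i) = c}"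

definition Tc :: "nat \<Rightarrow> (nat \<Rightarrow> 's) \<Rightarrow> (nat \<Rightarrow> 's set) \<Rightarrow> (nat \<Rightarrow> nat) \<Rightarrow> 's \<times> nat \<Rightarrow> 's set set" where
  "Tc m s T k c = T ` ind m s k c"

definition unf_states :: "'s set \<Rightarrow> 's set set \<Rightarrow> ('s \<times> 's set set) set" where
  "unf_states S TT = S \<times> Pow TT"

definition unf_P :: "('s \<Rightarrow> 'a \<Rightarrow> 's \<Rightarrow> real) \<Rightarrow> 's set set
                     \<Rightarrow> ('s \<times> 's set set) \<Rightarrow> 'a \<Rightarrow> ('s \<times> 's set set) \<Rightarrow> real" where
  "unf_P P TT x \<alpha> y =
     (if snd y = snd x \<union> {T\<in>TT. fst x \<in> T} then P (fst x) \<alpha> (fst y) else 0)"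

definition qT :: "nat \<Rightarrow> (nat \<Rightarrow> real) \<Rightarrow> (nat \<Rightarrow> 's) \<Rightarrow> (nat \<Rightarrow> 's set) \<Rightarrow> (nat \<Rightarrow> nat)
                  \<Rightarrow> 's \<times> nat \<Rightarrow> 's set \<Rightarrow> real" where
  "qT m q s T k c U = (\<Sum>i\<in>{i\<in>ind m s k c. T i = U}. q i)"

definition rewT :: "'s set \<Rightarrow> ('s \<times> 's set set) \<Rightarrow> real" where
  "rewT U x = (if fst x \<in> U \<and> U \<notin> snd x then 1 else 0)"

definition rew_c :: "nat \<Rightarrow> (nat \<Rightarrow> real) \<Rightarrow> (nat \<Rightarrow> 's) \<Rightarrow> (nat \<Rightarrow> 's set) \<Rightarrow> (nat \<Rightarrow> nat)
                     \<Rightarrow> 's \<times> nat \<Rightarrow> ('s \<times> 's set set) \<Rightarrow> real" where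
  "rew_c m q s T k c x = (\<Sum>U\<in>Tc m s T k c. qT m q s T k c U * rewT U x)"

definition vmax_c :: "'s set \<Rightarrow> 'a set \<Rightarrow> ('s \<Rightarrow> 'a \<Rightarrow> 's \<Rightarrow> real) \<Rightarrow> nat \<Rightarrow> (nat \<Rightarrow> real)
                      \<Rightarrow> (nat \<Rightarrow> 's) \<Rightarrow> (nat \<Rightarrow> 's set) \<Rightarrow> (nat \<Rightarrow> nat) \<Rightarrow> 's \<times> nat \<Rightarrow> real" where
  "vmax_c S Act P m q s T k c =
     (let TT = Tc m s T k c; Sc = unf_states S TT; Pc = unf_P P TT in
      SUP \<sigma>\<in>scheds Sc Act Pc. exp_total_rew Sc Act Pc \<sigma> (fst c, {}) (rew_c m q s T k c))"

definition vmin_c :: "'s set \<Rightarrow> 'a set \<Rightarrow> ('s \<Rightarrow> 'a \<Rightarrow> 's \<Rightarrow> real) \<Rightarrow> nat \<Rightarrow> (nat \<Rightarrow> real)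
                      \<Rightarrow> (nat \<Rightarrow> 's) \<Rightarrow> (nat \<Rightarrow> 's set) \<Rightarrow> (nat \<Rightarrow> nat) \<Rightarrow> 's \<times> nat \<Rightarrow> real" where
  "vmin_c S Act P m q s T k c =
     (let TT = Tc m s T k c; Sc = unf_states S TT; Pc = unf_P P TT in
      INF \<sigma>\<in>scheds Sc Act Pc. exp_total_rew Sc Act Pc \<sigma> (fst c, {}) (rew_c m q s T k c))"

end

theory Submission
  imports Defs
begin

text \<open>The left-hand side of \<open>(\<star>)\<close> is the sum over the combinations \<open>c = (s\<^sub>c, k)\<close> of their
  contributions, and the contribution of \<open>c\<close> depends only on how \<open>\<sigma>\<^sub>k\<close> behaves on paths
  starting in \<open>s\<^sub>c\<close>; hence the combinations can be served by independent schedulers, and it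
  suffices that the contributions of a single combination range exactly over the closed interval
  \<open>[v\<^sup>m\<^sup>i\<^sup>n\<^sub>c, v\<^sup>m\<^sup>a\<^sup>x\<^sub>c]\<close>. Through the goal unfolding a contribution is an expected total
  reward. The range is an interval because randomizing on the history realizes every convex
  combination of two schedulers, and it is closed because both extrema are attained: rewards are
  only collected when the set of reached targets grows, so total rewards converge and the optimal
  value satisfies the Bellman equation, and a memoryless scheduler that picks Bellman-optimal actions
  leading towards the rewarded states is optimal, since outside the states from which such actions
  reach a reward the value is not positive.\<close>

section \<open>Schedulers and expectations over paths\<close>

lemma last_state_Nil [simp]: "last_state s0 [] = s0"
  by (simp add: last_state_def)

lemma last_state_Cons [simp]: "last_state s0 ((\<alpha>, y) # h) = last_state y h"
  by (simp add: last_state_def)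

lemma last_state_append: "last_state s0 (pre @ h) = last_state (last_state s0 pre) h"
  by (simp add: last_state_def)

lemma pp_append_prefix:
  "pp P \<sigma> s0 (pre @ h0) h =
   pp P (\<lambda>s h'. if s = last_state s0 pre then \<sigma> s0 (pre @ h') else \<sigma> s h') (last_state s0 pre) h0 h"
proof (induction h arbitrary: h0)
  case (Cons a h)
  then show ?case by (cases a) (simp add: last_state_append)
qed simp

lemma pp_cong:
  assumes "\<And>h'. \<sigma>1 s0 h' = \<sigma>2 s0 h'"
  shows "pp P \<sigma>1 s0 h0 h = pp P \<sigma>2 s0 h0 h"
proof (induction h arbitrary: h0)
  case (Cons a h)
  then show ?case using assms by (cases a) simp
qed simp

lemma pp_snoc:
  "pp P \<sigma> s0 pre (h @ [(\<alpha>, t)]) = pp P \<sigma> s0 pre h * \<sigma> s0 (pre @ h) \<alpha> * P (last_state s0 (pre @ h)) \<alpha> t"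
proof (induction h arbitrary: pre)
  case (Cons a h)
  then show ?case by (cases a) simp
qed simp

lemma paths_len_0 [simp]: "paths_len S Act 0 = {[]}"
  by (auto simp: paths_len_def)

lemma paths_len_Suc:
  "paths_len S Act (Suc n) = (\<lambda>(a, h). a # h) ` ((Act \<times> S) \<times> paths_len S Act n)"
proof (rule set_eqI)
  fix h
  show "h \<in> paths_len S Act (Suc n) \<longleftrightarrow> h \<in> (\<lambda>(a, h). a # h) ` ((Act \<times> S) \<times> paths_len S Act n)"
    by (cases h) (auto simp: paths_len_def)
qed

lemma finite_paths_len: "finite S \<Longrightarrow> finite Act \<Longrightarrow> finite (paths_len S Act n)"
  by (induction n) (auto simp: paths_len_Suc)

lemma visits_Nil: "visits x [] T \<longleftrightarrow> x \<in> T"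
  by (simp add: visits_def)

lemma visits_Cons: "visits x ((\<alpha>, y) # h) T \<longleftrightarrow> x \<in> T \<or> visits y h T"
  by (auto simp: visits_def)

definition sched_shift :: "('s, 'a) sched \<Rightarrow> 's \<Rightarrow> 'a \<Rightarrow> 's \<Rightarrow> ('s, 'a) sched" where
  "sched_shift \<sigma> x \<alpha> y = (\<lambda>s h. if s = y then \<sigma> x ((\<alpha>, y) # h) else \<sigma> s h)"

lemma path_prob_Cons:
  "path_prob P \<sigma> x ((\<alpha>, y) # h) = \<sigma> x [] \<alpha> * P x \<alpha> y * path_prob P (sched_shift \<sigma> x \<alpha> y) y h"
proof -
  have "(\<lambda>s h'. if s = y then \<sigma> x ([(\<alpha>, y)] @ h') else \<sigma> s h') = sched_shift \<sigma> x \<alpha> y"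
    by (auto simp: sched_shift_def fun_eq_iff)
  then have "pp P \<sigma> x ([(\<alpha>, y)] @ []) h = pp P (sched_shift \<sigma> x \<alpha> y) y [] h"
    unfolding pp_append_prefix by simp
  then show ?thesis by (simp add: path_prob_def)
qed

definition memoryless :: "('s \<Rightarrow> 'a) \<Rightarrow> ('s, 'a) sched" where
  "memoryless d = (\<lambda>s0 h \<alpha>. if \<alpha> = d (last_state s0 h) then 1 else 0)"

lemma memoryless_Nil: "memoryless d x [] \<beta> = (if \<beta> = d x then 1 else 0)"
  by (simp add: memoryless_def)

lemma sched_shift_memoryless: "sched_shift (memoryless d) x \<beta> y y h = memoryless d y h"
  by (simp add: sched_shift_def memoryless_def)

definition first_then :: "'s \<Rightarrow> 'a \<Rightarrow> ('s \<Rightarrow> ('s, 'a) sched) \<Rightarrow> ('s, 'a) sched \<Rightarrow> ('s, 'a) sched" where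
  "first_then x \<alpha> \<tau> d =
     (\<lambda>s0 h. if s0 = x then (case h of [] \<Rightarrow> (\<lambda>\<beta>. if \<beta> = \<alpha> then 1 else 0)
                                    | b # h' \<Rightarrow> \<tau> (snd b) (snd b) h')
             else d s0 h)"

definition sched_by_start :: "('s \<Rightarrow> ('s, 'a) sched) \<Rightarrow> ('s, 'a) sched" where
  "sched_by_start \<tau> = (\<lambda>s0. \<tau> s0 s0)"

fun deviates :: "'s set \<Rightarrow> ('s \<Rightarrow> 'a set) \<Rightarrow> 's \<Rightarrow> ('a \<times> 's) list \<Rightarrow> bool" where
  "deviates Z A x [] = False"
| "deviates Z A x ((\<alpha>, y) # h) = (x \<in> Z \<and> (\<alpha> \<notin> A x \<or> deviates Z A y h))"

text \<open>Randomize between \<open>\<sigma>1\<close> and \<open>\<sigma>2\<close> with weights \<open>l\<close> and \<open>1 - l\<close>, conditioned on the history,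
  so that every path gets the mixed probability.\<close>

definition mix_sched :: "real \<Rightarrow> ('s \<Rightarrow> 'a \<Rightarrow> 's \<Rightarrow> real) \<Rightarrow> ('s, 'a) sched \<Rightarrow> ('s, 'a) sched \<Rightarrow> ('s, 'a) sched" where
  "mix_sched l P \<sigma>1 \<sigma>2 = (\<lambda>s0 h \<alpha>.
     if l * pp P \<sigma>1 s0 [] h + (1 - l) * pp P \<sigma>2 s0 [] h = 0 then \<sigma>1 s0 h \<alpha>
     else (l * pp P \<sigma>1 s0 [] h * \<sigma>1 s0 h \<alpha> + (1 - l) * pp P \<sigma>2 s0 [] h * \<sigma>2 s0 h \<alpha>) /
          (l * pp P \<sigma>1 s0 [] h + (1 - l) * pp P \<sigma>2 s0 [] h))"

locale mdp =
  fixes S :: "'s set" and Act :: "'a set" and P :: "'s \<Rightarrow> 'a \<Rightarrow> 's \<Rightarrow> real"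
  assumes mdp: "is_mdp S Act P"
begin

lemma finite_S: "finite S" and finite_Act: "finite Act" and S_nonempty: "S \<noteq> {}"
  using mdp by (auto simp: is_mdp_def)

lemma P_nonneg: "x \<in> S \<Longrightarrow> \<alpha> \<in> Act \<Longrightarrow> 0 \<le> P x \<alpha> y"
  using mdp by (auto simp: is_mdp_def)

lemma P_outside: "x \<in> S \<Longrightarrow> \<alpha> \<in> Act \<Longrightarrow> y \<notin> S \<Longrightarrow> P x \<alpha> y = 0"
  using mdp by (auto simp: is_mdp_def)

lemma P_pos_in_S: "x \<in> S \<Longrightarrow> \<alpha> \<in> Act \<Longrightarrow> 0 < P x \<alpha> y \<Longrightarrow> y \<in> S"
  using P_outside by force

abbreviation en :: "'s \<Rightarrow> 'a set" where "en x \<equiv> enabled S Act P x"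

lemma en_subset: "en x \<subseteq> Act"
  by (auto simp: enabled_def)

lemma finite_en: "finite (en x)"
  using finite_Act en_subset finite_subset by blast

lemma en_nonempty: "x \<in> S \<Longrightarrow> en x \<noteq> {}"
  using mdp by (auto simp: is_mdp_def enabled_def)

lemma sum_P_en: "\<alpha> \<in> en x \<Longrightarrow> (\<Sum>y\<in>S. P x \<alpha> y) = 1"
  by (auto simp: enabled_def)

lemma en_has_successor:
  assumes "x \<in> S" "\<alpha> \<in> en x"
  obtains y where "y \<in> S" "0 < P x \<alpha> y"
proof -
  obtain y where "y \<in> S" "P x \<alpha> y \<noteq> 0"
    using sum_P_en[OF assms(2)] by (metis sum.neutral zero_neq_one)
  moreover have "0 \<le> P x \<alpha> y" using P_nonneg[OF assms(1)] assms(2) en_subset by blast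
  ultimately show thesis using that by force
qed

abbreviation Scheds :: "('s, 'a) sched set" where "Scheds \<equiv> scheds S Act P"

lemma last_state_in_S: "s0 \<in> S \<Longrightarrow> set h \<subseteq> Act \<times> S \<Longrightarrow> last_state s0 h \<in> S"
  by (induction h arbitrary: s0) (auto simp: last_state_def)

lemma sched_nonneg: "\<sigma> \<in> Scheds \<Longrightarrow> s0 \<in> S \<Longrightarrow> set h \<subseteq> Act \<times> S \<Longrightarrow> 0 \<le> \<sigma> s0 h \<alpha>"
  by (auto simp: scheds_def is_sched_def)

lemma sched_disabled:
  "\<sigma> \<in> Scheds \<Longrightarrow> s0 \<in> S \<Longrightarrow> set h \<subseteq> Act \<times> S \<Longrightarrow> \<alpha> \<notin> en (last_state s0 h) \<Longrightarrow> \<sigma> s0 h \<alpha> = 0"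
  by (auto simp: scheds_def is_sched_def)

lemma sched_sum_en:
  "\<sigma> \<in> Scheds \<Longrightarrow> s0 \<in> S \<Longrightarrow> set h \<subseteq> Act \<times> S \<Longrightarrow> (\<Sum>\<alpha>\<in>en (last_state s0 h). \<sigma> s0 h \<alpha>) = 1"
  by (auto simp: scheds_def is_sched_def)

lemma in_Scheds_if_agrees:
  assumes "\<And>s0 h. s0 \<in> S \<Longrightarrow> set h \<subseteq> Act \<times> S \<Longrightarrow>
             \<exists>\<tau>\<in>Scheds. \<exists>s0' h'. s0' \<in> S \<and> set h' \<subseteq> Act \<times> S \<and>
               last_state s0' h' = last_state s0 h \<and> \<sigma> s0 h = \<tau> s0' h'"
  shows "\<sigma> \<in> Scheds"
  unfolding scheds_def is_sched_def mem_Collect_eq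
proof (intro allI impI)
  fix s0 h assume "s0 \<in> S \<and> set h \<subseteq> Act \<times> S"
  then obtain \<tau> s0' h' where "\<tau> \<in> Scheds" "s0' \<in> S" "set h' \<subseteq> Act \<times> S"
    "last_state s0' h' = last_state s0 h" "\<sigma> s0 h = \<tau> s0' h'"
    using assms by blast
  then show "(\<forall>\<alpha>. 0 \<le> \<sigma> s0 h \<alpha>) \<and> (\<forall>\<alpha>. \<alpha> \<notin> en (last_state s0 h) \<longrightarrow> \<sigma> s0 h \<alpha> = 0) \<and>
      (\<Sum>\<alpha>\<in>en (last_state s0 h). \<sigma> s0 h \<alpha>) = 1"
    using sched_nonneg sched_disabled sched_sum_en by metis
qed

lemma sched_sum:
  assumes "\<sigma> \<in> Scheds" "s0 \<in> S" "set h \<subseteq> Act \<times> S"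
  shows "(\<Sum>\<alpha>\<in>Act. \<sigma> s0 h \<alpha>) = 1"
proof -
  have "(\<Sum>\<alpha>\<in>Act. \<sigma> s0 h \<alpha>) = (\<Sum>\<alpha>\<in>en (last_state s0 h). \<sigma> s0 h \<alpha>)"
    by (rule sum.mono_neutral_right[OF finite_Act en_subset]) (use sched_disabled[OF assms] in auto)
  then show ?thesis using sched_sum_en[OF assms] by simp
qed

lemma sched_step_sum:
  assumes "\<sigma> \<in> Scheds" "x \<in> S"
  shows "(\<Sum>\<alpha>\<in>Act. \<Sum>y\<in>S. \<sigma> x [] \<alpha> * P x \<alpha> y) = 1"
proof -
  have "(\<Sum>y\<in>S. \<sigma> x [] \<alpha> * P x \<alpha> y) = \<sigma> x [] \<alpha>" for \<alpha>
    using sum_P_en sched_disabled[OF assms, of "[]" \<alpha>]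
    by (cases "\<alpha> \<in> en x") (simp_all add: sum_distrib_left[symmetric])
  then show ?thesis using sched_sum[OF assms, of "[]"] by simp
qed

lemma sched_step_sum_plus_const:
  assumes "\<sigma> \<in> Scheds" "x \<in> S"
  shows "(\<Sum>\<alpha>\<in>Act. \<Sum>y\<in>S. \<sigma> x [] \<alpha> * P x \<alpha> y * (c + g \<alpha> y)) =
         c + (\<Sum>\<alpha>\<in>Act. \<Sum>y\<in>S. \<sigma> x [] \<alpha> * P x \<alpha> y * g \<alpha> y)"
proof -
  have "(\<Sum>\<alpha>\<in>Act. \<Sum>y\<in>S. \<sigma> x [] \<alpha> * P x \<alpha> y * (c + g \<alpha> y)) =
        c * (\<Sum>\<alpha>\<in>Act. \<Sum>y\<in>S. \<sigma> x [] \<alpha> * P x \<alpha> y) + (\<Sum>\<alpha>\<in>Act. \<Sum>y\<in>S. \<sigma> x [] \<alpha> * P x \<alpha> y * g \<alpha> y)"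
    by (simp add: distrib_left sum.distrib sum_distrib_left mult.commute mult.left_commute)
  then show ?thesis using sched_step_sum[OF assms] by simp
qed

lemma sched_step_sum_const:
  "\<sigma> \<in> Scheds \<Longrightarrow> x \<in> S \<Longrightarrow> (\<Sum>\<alpha>\<in>Act. \<Sum>y\<in>S. \<sigma> x [] \<alpha> * P x \<alpha> y * c) = c"
  using sched_step_sum_plus_const[of \<sigma> x c "\<lambda>_ _. 0"] by simp

lemma sched_step_nonneg: "\<sigma> \<in> Scheds \<Longrightarrow> x \<in> S \<Longrightarrow> \<alpha> \<in> Act \<Longrightarrow> 0 \<le> \<sigma> x [] \<alpha> * P x \<alpha> y"
  using sched_nonneg[of \<sigma> x "[]" \<alpha>] P_nonneg[of x \<alpha> y] by simp

lemma sched_step_pos: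
  "\<sigma> \<in> Scheds \<Longrightarrow> x \<in> S \<Longrightarrow> \<alpha> \<in> Act \<Longrightarrow> \<sigma> x [] \<alpha> * P x \<alpha> y \<noteq> 0 \<Longrightarrow> 0 < P x \<alpha> y"
  using sched_nonneg[of \<sigma> x "[]" \<alpha>] P_nonneg[of x \<alpha> y] by (auto simp: less_le)

lemma sched_shift_in_Scheds:
  assumes "\<sigma> \<in> Scheds" "x \<in> S" "\<alpha> \<in> Act" "y \<in> S"
  shows "sched_shift \<sigma> x \<alpha> y \<in> Scheds"
proof (rule in_Scheds_if_agrees)
  fix s0 h assume "s0 \<in> S" "set h \<subseteq> Act \<times> S"
  then show "\<exists>\<tau>\<in>Scheds. \<exists>s0' h'. s0' \<in> S \<and> set h' \<subseteq> Act \<times> S \<and>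
      last_state s0' h' = last_state s0 h \<and> sched_shift \<sigma> x \<alpha> y s0 h = \<tau> s0' h'"
  proof (cases "s0 = y")
    case True
    then show ?thesis using assms \<open>set h \<subseteq> Act \<times> S\<close>
      by (intro bexI[of _ \<sigma>] exI[of _ x] exI[of _ "(\<alpha>, y) # h"]) (auto simp: sched_shift_def)
  qed (use assms \<open>s0 \<in> S\<close> \<open>set h \<subseteq> Act \<times> S\<close> in \<open>auto simp: sched_shift_def\<close>)
qed

lemma memoryless_in_Scheds:
  assumes "\<And>y. y \<in> S \<Longrightarrow> d y \<in> en y"
  shows "memoryless d \<in> Scheds"
  unfolding scheds_def is_sched_def mem_Collect_eq
proof (intro allI impI)
  fix s0 h assume "s0 \<in> S \<and> set h \<subseteq> Act \<times> S"
  then have "d (last_state s0 h) \<in> en (last_state s0 h)"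
    using assms last_state_in_S by blast
  then show "(\<forall>\<alpha>. 0 \<le> memoryless d s0 h \<alpha>) \<and>
      (\<forall>\<alpha>. \<alpha> \<notin> en (last_state s0 h) \<longrightarrow> memoryless d s0 h \<alpha> = 0) \<and>
      (\<Sum>\<alpha>\<in>en (last_state s0 h). memoryless d s0 h \<alpha>) = 1"
    using finite_en by (auto simp: memoryless_def)
qed

definition default_sched :: "('s, 'a) sched" where
  "default_sched = memoryless (\<lambda>y. SOME \<alpha>. \<alpha> \<in> en y)"

lemma default_sched_in_Scheds: "default_sched \<in> Scheds"
  unfolding default_sched_def
  by (rule memoryless_in_Scheds) (meson en_nonempty ex_in_conv someI)

lemma sched_by_start_in_Scheds:
  assumes "\<And>x. x \<in> S \<Longrightarrow> \<tau> x \<in> Scheds"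
  shows "sched_by_start \<tau> \<in> Scheds"
  by (rule in_Scheds_if_agrees) (use assms in \<open>auto simp: sched_by_start_def\<close>)

lemma first_then_in_Scheds:
  assumes "x \<in> S" "\<alpha> \<in> en x" "\<And>y. y \<in> S \<Longrightarrow> \<tau> y \<in> Scheds"
  shows "first_then x \<alpha> \<tau> default_sched \<in> Scheds"
proof -
  let ?\<sigma> = "first_then x \<alpha> \<tau> default_sched"
  have first: "(\<forall>\<beta>. 0 \<le> ?\<sigma> x [] \<beta>) \<and> (\<forall>\<beta>. \<beta> \<notin> en (last_state x []) \<longrightarrow> ?\<sigma> x [] \<beta> = 0) \<and>
      (\<Sum>\<beta>\<in>en (last_state x []). ?\<sigma> x [] \<beta>) = 1"
    using assms(2) finite_en by (auto simp: first_then_def)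
  show ?thesis
    unfolding scheds_def is_sched_def mem_Collect_eq
  proof (intro allI impI)
    fix s0 h assume s0h: "s0 \<in> S \<and> set h \<subseteq> Act \<times> S"
    show "(\<forall>\<beta>. 0 \<le> ?\<sigma> s0 h \<beta>) \<and> (\<forall>\<beta>. \<beta> \<notin> en (last_state s0 h) \<longrightarrow> ?\<sigma> s0 h \<beta> = 0) \<and>
        (\<Sum>\<beta>\<in>en (last_state s0 h). ?\<sigma> s0 h \<beta>) = 1"
    proof (cases "s0 = x \<and> h = []")
      case True
      then show ?thesis using first by simp
    next
      case False
      have "\<exists>\<tau>'\<in>Scheds. \<exists>s0' h'. s0' \<in> S \<and> set h' \<subseteq> Act \<times> S \<and>
          last_state s0' h' = last_state s0 h \<and> ?\<sigma> s0 h = \<tau>' s0' h'"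
      proof (cases "s0 = x")
        case True
        then obtain \<beta> y h' where h: "h = (\<beta>, y) # h'" using False by (metis list.exhaust prod.exhaust)
        have "y \<in> S" "set h' \<subseteq> Act \<times> S" using s0h h by auto
        then show ?thesis using True h assms(3)[of y] by (auto simp: first_then_def)
      next
        case False
        then show ?thesis using s0h default_sched_in_Scheds by (auto simp: first_then_def)
      qed
      then show ?thesis using sched_nonneg sched_disabled sched_sum_en by metis
    qed
  qed
qed

lemma Scheds_nonempty: "Scheds \<noteq> {}"
  using default_sched_in_Scheds by blast

definition expect :: "nat \<Rightarrow> ('s, 'a) sched \<Rightarrow> 's \<Rightarrow> (('a \<times> 's) list \<Rightarrow> real) \<Rightarrow> real" where
  "expect n \<sigma> x f = (\<Sum>h\<in>paths_len S Act n. path_prob P \<sigma> x h * f h)"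

lemma expect_0: "expect 0 \<sigma> x f = f []"
  by (simp add: expect_def path_prob_def)

lemma expect_Suc:
  "expect (Suc n) \<sigma> x f =
   (\<Sum>\<alpha>\<in>Act. \<Sum>y\<in>S. \<sigma> x [] \<alpha> * P x \<alpha> y * expect n (sched_shift \<sigma> x \<alpha> y) y (\<lambda>h. f ((\<alpha>, y) # h)))"
proof -
  have inj: "inj_on (\<lambda>(a, h). a # h) ((Act \<times> S) \<times> paths_len S Act n)"
    by (auto simp: inj_on_def)
  have "expect (Suc n) \<sigma> x f =
        (\<Sum>(a, h)\<in>(Act \<times> S) \<times> paths_len S Act n. path_prob P \<sigma> x (a # h) * f (a # h))"
    unfolding expect_def paths_len_Suc by (subst sum.reindex[OF inj]) (simp add: case_prod_beta')
  also have "\<dots> = (\<Sum>a\<in>Act \<times> S. \<Sum>h\<in>paths_len S Act n. path_prob P \<sigma> x (a # h) * f (a # h))"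
    by (rule sum.cartesian_product[symmetric])
  also have "\<dots> = (\<Sum>\<alpha>\<in>Act. \<Sum>y\<in>S. \<Sum>h\<in>paths_len S Act n. path_prob P \<sigma> x ((\<alpha>, y) # h) * f ((\<alpha>, y) # h))"
    by (rule sum.cartesian_product')
  also have "\<dots> = (\<Sum>\<alpha>\<in>Act. \<Sum>y\<in>S. \<sigma> x [] \<alpha> * P x \<alpha> y *
                     expect n (sched_shift \<sigma> x \<alpha> y) y (\<lambda>h. f ((\<alpha>, y) # h)))"
    by (simp add: path_prob_Cons expect_def sum_distrib_left mult.assoc)
  finally show ?thesis .
qed

lemma expect_add: "expect n \<sigma> x (\<lambda>h. f h + g h) = expect n \<sigma> x f + expect n \<sigma> x g"
  by (simp add: expect_def distrib_left sum.distrib)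

lemma expect_diff: "expect n \<sigma> x (\<lambda>h. f h - g h) = expect n \<sigma> x f - expect n \<sigma> x g"
  by (simp add: expect_def right_diff_distrib sum_subtractf)

lemma expect_cong_sched: "(\<And>h. \<sigma>1 x h = \<sigma>2 x h) \<Longrightarrow> expect n \<sigma>1 x f = expect n \<sigma>2 x f"
  unfolding expect_def path_prob_def using pp_cong[of \<sigma>1 x \<sigma>2] by simp

lemma expect_const: "\<sigma> \<in> Scheds \<Longrightarrow> x \<in> S \<Longrightarrow> expect n \<sigma> x (\<lambda>_. c) = c"
proof (induction n arbitrary: \<sigma> x)
  case (Suc n)
  then have "expect (Suc n) \<sigma> x (\<lambda>_. c) = (\<Sum>\<alpha>\<in>Act. \<Sum>y\<in>S. \<sigma> x [] \<alpha> * P x \<alpha> y * c)"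
    unfolding expect_Suc using sched_shift_in_Scheds by (auto intro!: sum.cong)
  then show ?case using sched_step_sum_const[OF Suc.prems] by simp
qed (simp add: expect_0)

lemma pp_nonneg:
  assumes "\<sigma> \<in> Scheds" "s0 \<in> S" "set pre \<subseteq> Act \<times> S" "set h \<subseteq> Act \<times> S"
  shows "0 \<le> pp P \<sigma> s0 pre h"
  using assms(3,4)
proof (induction h arbitrary: pre)
  case (Cons a h)
  obtain \<alpha> t where a: "a = (\<alpha>, t)" by (cases a)
  have "0 \<le> pp P \<sigma> s0 (pre @ [(\<alpha>, t)]) h" using Cons a by auto
  moreover have "0 \<le> \<sigma> s0 pre \<alpha>" using sched_nonneg[OF assms(1,2) Cons.prems(1)] .
  moreover have "0 \<le> P (last_state s0 pre) \<alpha> t"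
    using P_nonneg[OF last_state_in_S[OF assms(2) Cons.prems(1)]] Cons.prems a by auto
  ultimately show ?case by (simp add: a)
qed simp

lemma expect_mono:
  assumes "\<sigma> \<in> Scheds" "x \<in> S" "\<And>h. set h \<subseteq> Act \<times> S \<Longrightarrow> f h \<le> g h"
  shows "expect n \<sigma> x f \<le> expect n \<sigma> x g"
  unfolding expect_def path_prob_def
  by (rule sum_mono, rule mult_left_mono)
     (use assms pp_nonneg[OF assms(1,2)] in \<open>auto simp: paths_len_def\<close>)

lemma expect_nonneg:
  "\<sigma> \<in> Scheds \<Longrightarrow> x \<in> S \<Longrightarrow> (\<And>h. set h \<subseteq> Act \<times> S \<Longrightarrow> 0 \<le> f h) \<Longrightarrow> 0 \<le> expect n \<sigma> x f"
  using expect_mono[of \<sigma> x "\<lambda>_. 0" f n] by (simp add: expect_def)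

lemma sched_action_mono:
  assumes "\<sigma> \<in> Scheds" "x \<in> S" "\<alpha> \<in> Act"
    and "\<And>y. y \<in> S \<Longrightarrow> 0 < P x \<alpha> y \<Longrightarrow> g y \<le> g' y"
  shows "(\<Sum>y\<in>S. \<sigma> x [] \<alpha> * P x \<alpha> y * g y) \<le> (\<Sum>y\<in>S. \<sigma> x [] \<alpha> * P x \<alpha> y * g' y)"
proof (rule sum_mono)
  fix y assume "y \<in> S"
  then show "\<sigma> x [] \<alpha> * P x \<alpha> y * g y \<le> \<sigma> x [] \<alpha> * P x \<alpha> y * g' y"
    using assms sched_step_nonneg[of \<sigma> x \<alpha> y] sched_step_pos[of \<sigma> x \<alpha> y]
    by (cases "\<sigma> x [] \<alpha> * P x \<alpha> y = 0") (auto intro: mult_left_mono)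
qed

lemma sched_step_mono:
  assumes "\<sigma> \<in> Scheds" "x \<in> S"
    and "\<And>\<alpha> y. \<alpha> \<in> Act \<Longrightarrow> y \<in> S \<Longrightarrow> 0 < P x \<alpha> y \<Longrightarrow> g \<alpha> y \<le> g' \<alpha> y"
  shows "(\<Sum>\<alpha>\<in>Act. \<Sum>y\<in>S. \<sigma> x [] \<alpha> * P x \<alpha> y * g \<alpha> y) \<le> (\<Sum>\<alpha>\<in>Act. \<Sum>y\<in>S. \<sigma> x [] \<alpha> * P x \<alpha> y * g' \<alpha> y)"
  using assms by (intro sum_mono sched_action_mono) auto

lemma sched_step_abs_le:
  assumes "\<sigma> \<in> Scheds" "x \<in> S"
    and "\<And>\<alpha> y. \<alpha> \<in> Act \<Longrightarrow> y \<in> S \<Longrightarrow> 0 < P x \<alpha> y \<Longrightarrow> \<bar>g \<alpha> y\<bar> \<le> B"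
  shows "\<bar>\<Sum>\<alpha>\<in>Act. \<Sum>y\<in>S. \<sigma> x [] \<alpha> * P x \<alpha> y * g \<alpha> y\<bar> \<le> B"
proof -
  have "(\<Sum>\<alpha>\<in>Act. \<Sum>y\<in>S. \<sigma> x [] \<alpha> * P x \<alpha> y * g \<alpha> y) \<le> (\<Sum>\<alpha>\<in>Act. \<Sum>y\<in>S. \<sigma> x [] \<alpha> * P x \<alpha> y * B)"
    using assms(3) by (intro sched_step_mono[OF assms(1,2)]) (force simp: abs_le_iff)
  moreover have "(\<Sum>\<alpha>\<in>Act. \<Sum>y\<in>S. \<sigma> x [] \<alpha> * P x \<alpha> y * - B) \<le> (\<Sum>\<alpha>\<in>Act. \<Sum>y\<in>S. \<sigma> x [] \<alpha> * P x \<alpha> y * g \<alpha> y)"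
    using assms(3) by (intro sched_step_mono[OF assms(1,2)]) (force simp: abs_le_iff)
  ultimately show ?thesis unfolding sched_step_sum_const[OF assms(1,2)] by linarith
qed

definition total_rew_upto :: "('s \<Rightarrow> real) \<Rightarrow> nat \<Rightarrow> ('s, 'a) sched \<Rightarrow> 's \<Rightarrow> real" where
  "total_rew_upto r n \<sigma> x = expect n \<sigma> x (\<lambda>h. r x + (\<Sum>a\<leftarrow>h. r (snd a)))"

abbreviation total_rew :: "('s \<Rightarrow> real) \<Rightarrow> ('s, 'a) sched \<Rightarrow> 's \<Rightarrow> real" where
  "total_rew r \<sigma> x \<equiv> exp_total_rew S Act P \<sigma> x r"

lemma total_rew_eq_lim: "total_rew r \<sigma> x = lim (\<lambda>n. total_rew_upto r n \<sigma> x)"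
  by (simp add: exp_total_rew_def total_rew_upto_def expect_def)

lemma total_rew_upto_0: "total_rew_upto r 0 \<sigma> x = r x"
  by (simp add: total_rew_upto_def expect_0)

lemma total_rew_upto_Suc:
  assumes "\<sigma> \<in> Scheds" "x \<in> S"
  shows "total_rew_upto r (Suc n) \<sigma> x =
         r x + (\<Sum>\<alpha>\<in>Act. \<Sum>y\<in>S. \<sigma> x [] \<alpha> * P x \<alpha> y * total_rew_upto r n (sched_shift \<sigma> x \<alpha> y) y)"
proof -
  have "expect n (sched_shift \<sigma> x \<alpha> y) y (\<lambda>h. r x + (\<Sum>a\<leftarrow>(\<alpha>, y) # h. r (snd a))) =
        r x + total_rew_upto r n (sched_shift \<sigma> x \<alpha> y) y" if "\<alpha> \<in> Act" "y \<in> S" for \<alpha> y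
    using expect_add[of n _ y "\<lambda>_. r x"] expect_const[OF sched_shift_in_Scheds[OF assms that] \<open>y \<in> S\<close>]
    by (simp add: total_rew_upto_def)
  then have "total_rew_upto r (Suc n) \<sigma> x =
      (\<Sum>\<alpha>\<in>Act. \<Sum>y\<in>S. \<sigma> x [] \<alpha> * P x \<alpha> y * (r x + total_rew_upto r n (sched_shift \<sigma> x \<alpha> y) y))"
    unfolding total_rew_upto_def[of r "Suc n"] expect_Suc by (intro sum.cong refl) auto
  then show ?thesis using sched_step_sum_plus_const[OF assms] by simp
qed

lemma total_rew_upto_cong_sched:
  "(\<And>h. \<sigma>1 x h = \<sigma>2 x h) \<Longrightarrow> total_rew_upto r n \<sigma>1 x = total_rew_upto r n \<sigma>2 x"
  unfolding total_rew_upto_def by (rule expect_cong_sched)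

lemma total_rew_cong_sched: "(\<And>h. \<sigma>1 x h = \<sigma>2 x h) \<Longrightarrow> total_rew r \<sigma>1 x = total_rew r \<sigma>2 x"
  unfolding total_rew_eq_lim using total_rew_upto_cong_sched by metis

lemma total_rew_upto_diff:
  "total_rew_upto (\<lambda>x. a x - b x) n \<sigma> x = total_rew_upto a n \<sigma> x - total_rew_upto b n \<sigma> x"
proof -
  have "a x - b x + (\<Sum>y\<leftarrow>h. a (snd y) - b (snd y)) =
        a x + (\<Sum>y\<leftarrow>h. a (snd y)) - (b x + (\<Sum>y\<leftarrow>h. b (snd y)))"
    for h :: "('a \<times> 's) list"
    by (induction h) auto
  then show ?thesis unfolding total_rew_upto_def expect_diff[symmetric] by presburger
qed

lemma total_rew_upto_mono_nonneg:
  assumes "\<And>x. x \<in> S \<Longrightarrow> 0 \<le> r x" "\<sigma> \<in> Scheds" "x \<in> S"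
  shows "total_rew_upto r n \<sigma> x \<le> total_rew_upto r (Suc n) \<sigma> x"
  using assms(2,3)
proof (induction n arbitrary: \<sigma> x)
  case 0
  have "0 \<le> (\<Sum>\<alpha>\<in>Act. \<Sum>y\<in>S. \<sigma> x [] \<alpha> * P x \<alpha> y * total_rew_upto r 0 (sched_shift \<sigma> x \<alpha> y) y)"
    using assms(1) sched_step_nonneg[OF 0] by (auto intro!: sum_nonneg simp: total_rew_upto_0)
  then show ?case unfolding total_rew_upto_Suc[OF 0] by (simp add: total_rew_upto_0)
next
  case (Suc n)
  then show ?case
    unfolding total_rew_upto_Suc[OF Suc.prems, of r] total_rew_upto_Suc[OF Suc.prems, of r "Suc n"]
    by (intro add_left_mono sched_step_mono[OF Suc.prems] Suc.IH sched_shift_in_Scheds Suc.prems)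
qed

lemma successor_eq_if_avg_eq_max:
  assumes "x \<in> S" "\<alpha> \<in> en x" "(\<Sum>y\<in>S. P x \<alpha> y * f y) = M"
    and "\<And>y. y \<in> S \<Longrightarrow> 0 < P x \<alpha> y \<Longrightarrow> f y \<le> M" and "0 < P x \<alpha> u"
  shows "f u = M"
proof -
  have \<alpha>: "\<alpha> \<in> Act" using assms(2) en_subset by blast
  have u: "u \<in> S" using P_pos_in_S[OF assms(1) \<alpha> assms(5)] .
  have "(\<Sum>y\<in>S. P x \<alpha> y * (M - f y)) = (\<Sum>y\<in>S. P x \<alpha> y) * M - (\<Sum>y\<in>S. P x \<alpha> y * f y)"
    by (simp add: right_diff_distrib sum_subtractf sum_distrib_right)
  then have sum0: "(\<Sum>y\<in>S. P x \<alpha> y * (M - f y)) = 0" using sum_P_en[OF assms(2)] assms(3) by simp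
  have "\<forall>y\<in>S. 0 \<le> P x \<alpha> y * (M - f y)"
  proof
    fix y assume y: "y \<in> S"
    show "0 \<le> P x \<alpha> y * (M - f y)"
    proof (cases "0 < P x \<alpha> y")
      case True
      then show ?thesis using assms(4)[OF y True] by simp
    next
      case False
      then have "P x \<alpha> y = 0" using P_nonneg[OF assms(1) \<alpha>, of y] by simp
      then show ?thesis by simp
    qed
  qed
  then have "\<forall>y\<in>S. P x \<alpha> y * (M - f y) = 0"
    using sum_nonneg_eq_0_iff[OF finite_S, of "\<lambda>y. P x \<alpha> y * (M - f y)"] sum0 by blast
  then have "P x \<alpha> u * (M - f u) = 0" using u by blast
  then show ?thesis using assms(5) by simp
qed

definition deviation_prob :: "'s set \<Rightarrow> ('s \<Rightarrow> 'a set) \<Rightarrow> nat \<Rightarrow> ('s, 'a) sched \<Rightarrow> 's \<Rightarrow> real" where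
  "deviation_prob Z A n \<sigma> x = expect n \<sigma> x (\<lambda>h. if deviates Z A x h then 1 else 0)"

lemma deviation_prob_0: "deviation_prob Z A 0 \<sigma> x = 0"
  by (simp add: deviation_prob_def expect_0)

lemma deviation_prob_Suc:
  assumes "x \<in> Z" "\<sigma> \<in> Scheds" "x \<in> S"
  shows "deviation_prob Z A (Suc n) \<sigma> x =
    (\<Sum>\<alpha>\<in>Act. \<Sum>y\<in>S. \<sigma> x [] \<alpha> * P x \<alpha> y * (if \<alpha> \<in> A x then deviation_prob Z A n (sched_shift \<sigma> x \<alpha> y) y else 1))"
  unfolding deviation_prob_def expect_Suc
proof (intro sum.cong refl)
  fix \<alpha> y assume "\<alpha> \<in> Act" "y \<in> S"
  then show "\<sigma> x [] \<alpha> * P x \<alpha> y * expect n (sched_shift \<sigma> x \<alpha> y) y (\<lambda>h. if deviates Z A x ((\<alpha>, y) # h) then 1 else 0) =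
      \<sigma> x [] \<alpha> * P x \<alpha> y * (if \<alpha> \<in> A x then expect n (sched_shift \<sigma> x \<alpha> y) y (\<lambda>h. if deviates Z A y h then 1 else 0) else 1)"
    using assms(1) expect_const[OF sched_shift_in_Scheds[OF assms(2,3) \<open>\<alpha> \<in> Act\<close> \<open>y \<in> S\<close>] \<open>y \<in> S\<close>, of n 1] by simp
qed

lemma deviation_prob_nonneg: "\<sigma> \<in> Scheds \<Longrightarrow> x \<in> S \<Longrightarrow> 0 \<le> deviation_prob Z A n \<sigma> x"
  unfolding deviation_prob_def by (rule expect_nonneg) auto

lemma deviation_prob_le_1: "\<sigma> \<in> Scheds \<Longrightarrow> x \<in> S \<Longrightarrow> deviation_prob Z A n \<sigma> x \<le> 1"
  unfolding deviation_prob_def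
  using expect_mono[of \<sigma> x _ "\<lambda>_. 1" n] expect_const[of \<sigma> x n 1] by simp

lemma deviation_prob_mono:
  "\<sigma> \<in> Scheds \<Longrightarrow> x \<in> S \<Longrightarrow> deviation_prob Z A n \<sigma> x \<le> deviation_prob Z A (Suc n) \<sigma> x"
proof (induction n arbitrary: \<sigma> x)
  case 0
  then show ?case unfolding deviation_prob_0 by (rule deviation_prob_nonneg)
next
  case (Suc n)
  show ?case
  proof (cases "x \<in> Z")
    case True
    show ?thesis unfolding deviation_prob_Suc[OF True Suc.prems]
      using Suc.IH[OF sched_shift_in_Scheds[OF Suc.prems]] by (intro sched_step_mono[OF Suc.prems]) auto
  next
    case False
    have "\<not> deviates Z A x h" for h using False by (cases h) auto
    then show ?thesis unfolding deviation_prob_def by (simp add: expect_def)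
  qed
qed

lemma mix_sched_in_Scheds:
  assumes "0 \<le> l" "l \<le> 1" "\<sigma>1 \<in> Scheds" "\<sigma>2 \<in> Scheds"
  shows "mix_sched l P \<sigma>1 \<sigma>2 \<in> Scheds"
  unfolding scheds_def is_sched_def mem_Collect_eq
proof (intro allI impI)
  fix s0 h assume "s0 \<in> S \<and> set h \<subseteq> Act \<times> S"
  then have s0: "s0 \<in> S" and h: "set h \<subseteq> Act \<times> S" by auto
  define p1 where "p1 = pp P \<sigma>1 s0 [] h"
  define p2 where "p2 = pp P \<sigma>2 s0 [] h"
  have p: "0 \<le> p1" "0 \<le> p2"
    unfolding p1_def p2_def using pp_nonneg[OF assms(3) s0 _ h] pp_nonneg[OF assms(4) s0 _ h] by auto
  have eq: "mix_sched l P \<sigma>1 \<sigma>2 s0 h = (\<lambda>\<alpha>. if l * p1 + (1 - l) * p2 = 0 then \<sigma>1 s0 h \<alpha>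
     else (l * p1 * \<sigma>1 s0 h \<alpha> + (1 - l) * p2 * \<sigma>2 s0 h \<alpha>) / (l * p1 + (1 - l) * p2))"
    unfolding mix_sched_def p1_def p2_def by simp
  have sum1: "(\<Sum>\<beta>\<in>en (last_state s0 h). mix_sched l P \<sigma>1 \<sigma>2 s0 h \<beta>) = 1"
  proof (cases "l * p1 + (1 - l) * p2 = 0")
    case False
    then have "(\<Sum>\<beta>\<in>en (last_state s0 h). mix_sched l P \<sigma>1 \<sigma>2 s0 h \<beta>) =
        (l * p1 * (\<Sum>\<beta>\<in>en (last_state s0 h). \<sigma>1 s0 h \<beta>) + (1 - l) * p2 * (\<Sum>\<beta>\<in>en (last_state s0 h). \<sigma>2 s0 h \<beta>)) /
        (l * p1 + (1 - l) * p2)"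
      unfolding eq by (simp add: sum_divide_distrib[symmetric] sum.distrib sum_distrib_left)
    then show ?thesis using False sched_sum_en[OF assms(3) s0 h] sched_sum_en[OF assms(4) s0 h] by simp
  qed (simp add: eq sched_sum_en[OF assms(3) s0 h])
  show "(\<forall>\<beta>. 0 \<le> mix_sched l P \<sigma>1 \<sigma>2 s0 h \<beta>) \<and>
      (\<forall>\<beta>. \<beta> \<notin> en (last_state s0 h) \<longrightarrow> mix_sched l P \<sigma>1 \<sigma>2 s0 h \<beta> = 0) \<and>
      (\<Sum>\<beta>\<in>en (last_state s0 h). mix_sched l P \<sigma>1 \<sigma>2 s0 h \<beta>) = 1"
  proof (intro conjI allI impI sum1)
    fix \<beta>
    show "0 \<le> mix_sched l P \<sigma>1 \<sigma>2 s0 h \<beta>"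
      unfolding eq using sched_nonneg[OF assms(3) s0 h] sched_nonneg[OF assms(4) s0 h] p assms(1,2)
      by (simp add: divide_nonneg_nonneg add_nonneg_nonneg mult_nonneg_nonneg)
    assume "\<beta> \<notin> en (last_state s0 h)"
    then show "mix_sched l P \<sigma>1 \<sigma>2 s0 h \<beta> = 0"
      unfolding eq using sched_disabled[OF assms(3) s0 h] sched_disabled[OF assms(4) s0 h] by simp
  qed
qed

lemma pp_mix_sched:
  assumes "0 \<le> l" "l \<le> 1" "\<sigma>1 \<in> Scheds" "\<sigma>2 \<in> Scheds" "s0 \<in> S" "set h \<subseteq> Act \<times> S"
  shows "pp P (mix_sched l P \<sigma>1 \<sigma>2) s0 [] h = l * pp P \<sigma>1 s0 [] h + (1 - l) * pp P \<sigma>2 s0 [] h"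
  using assms(6)
proof (induction h rule: rev_induct)
  case (snoc a h)
  obtain \<alpha> t where a: "a = (\<alpha>, t)" by (cases a)
  have h: "set h \<subseteq> Act \<times> S" using snoc.prems by auto
  define p1 where "p1 = pp P \<sigma>1 s0 [] h"
  define p2 where "p2 = pp P \<sigma>2 s0 [] h"
  have p: "0 \<le> p1" "0 \<le> p2"
    unfolding p1_def p2_def using pp_nonneg[OF assms(3,5) _ h] pp_nonneg[OF assms(4,5) _ h] by auto
  define D where "D = l * p1 + (1 - l) * p2"
  have IH: "pp P (mix_sched l P \<sigma>1 \<sigma>2) s0 [] h = D" using snoc.IH[OF h] by (simp add: D_def p1_def p2_def)
  have mix: "mix_sched l P \<sigma>1 \<sigma>2 s0 h \<alpha> = (if D = 0 then \<sigma>1 s0 h \<alpha>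
       else (l * p1 * \<sigma>1 s0 h \<alpha> + (1 - l) * p2 * \<sigma>2 s0 h \<alpha>) / D)"
    unfolding mix_sched_def D_def p1_def p2_def by simp
  show ?case
  proof (cases "D = 0")
    case True
    then have z: "l * p1 = 0" "(1 - l) * p2 = 0"
      using p assms(1,2) unfolding D_def by (simp_all add: add_nonneg_eq_0_iff)
    have "l * pp P \<sigma>1 s0 [] (h @ [a]) + (1 - l) * pp P \<sigma>2 s0 [] (h @ [a]) = 0"
      unfolding a pp_snoc append_Nil p1_def[symmetric] p2_def[symmetric]
      by (simp only: mult.assoc[symmetric] z)
    then show ?thesis unfolding a pp_snoc append_Nil IH True by simp
  next
    case False
    have "pp P (mix_sched l P \<sigma>1 \<sigma>2) s0 [] (h @ [a]) = D * mix_sched l P \<sigma>1 \<sigma>2 s0 h \<alpha> * P (last_state s0 h) \<alpha> t"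
      unfolding a pp_snoc using IH by simp
    also have "\<dots> = l * (p1 * \<sigma>1 s0 h \<alpha> * P (last_state s0 h) \<alpha> t) + (1 - l) * (p2 * \<sigma>2 s0 h \<alpha> * P (last_state s0 h) \<alpha> t)"
    proof -
      have "D * mix_sched l P \<sigma>1 \<sigma>2 s0 h \<alpha> = l * p1 * \<sigma>1 s0 h \<alpha> + (1 - l) * p2 * \<sigma>2 s0 h \<alpha>"
        using False unfolding mix by simp
      then show ?thesis by (simp only:) (simp add: algebra_simps)
    qed
    also have "\<dots> = l * pp P \<sigma>1 s0 [] (h @ [a]) + (1 - l) * pp P \<sigma>2 s0 [] (h @ [a])"
      unfolding a pp_snoc by (simp add: p1_def p2_def)
    finally show ?thesis .
  qed
qed simp

definition reach_upto :: "nat \<Rightarrow> ('s, 'a) sched \<Rightarrow> 's \<Rightarrow> 's set \<Rightarrow> real" where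
  "reach_upto n \<sigma> x T = expect n \<sigma> x (\<lambda>h. if visits x h T then 1 else 0)"

lemma reach_prob_eq_lim: "reach_prob S Act P \<sigma> x T = lim (\<lambda>n. reach_upto n \<sigma> x T)"
  unfolding reach_prob_def reach_upto_def expect_def
  by (simp add: sum.inter_filter[OF finite_paths_len[OF finite_S finite_Act]] if_distrib cong: if_cong)

lemma reach_upto_0: "reach_upto 0 \<sigma> x T = (if x \<in> T then 1 else 0)"
  by (simp add: reach_upto_def expect_0 visits_Nil)

lemma reach_upto_Suc:
  assumes "\<sigma> \<in> Scheds" "x \<in> S"
  shows "reach_upto (Suc n) \<sigma> x T = (if x \<in> T then 1
           else (\<Sum>\<alpha>\<in>Act. \<Sum>y\<in>S. \<sigma> x [] \<alpha> * P x \<alpha> y * reach_upto n (sched_shift \<sigma> x \<alpha> y) y T))"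
proof (cases "x \<in> T")
  case True
  have "reach_upto (Suc n) \<sigma> x T = (\<Sum>\<alpha>\<in>Act. \<Sum>y\<in>S. \<sigma> x [] \<alpha> * P x \<alpha> y * 1)"
    unfolding reach_upto_def expect_Suc
  proof (intro sum.cong refl)
    fix \<alpha> y assume "\<alpha> \<in> Act" "y \<in> S"
    then show "\<sigma> x [] \<alpha> * P x \<alpha> y * expect n (sched_shift \<sigma> x \<alpha> y) y (\<lambda>h. if visits x ((\<alpha>, y) # h) T then 1 else 0) =
        \<sigma> x [] \<alpha> * P x \<alpha> y * 1"
      using True expect_const[OF sched_shift_in_Scheds[OF assms \<open>\<alpha> \<in> Act\<close> \<open>y \<in> S\<close>] \<open>y \<in> S\<close>, of n 1]
      by (simp add: visits_Cons)
  qed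
  then show ?thesis using True sched_step_sum_const[OF assms, of 1] by simp
next
  case False
  then show ?thesis unfolding reach_upto_def expect_Suc by (simp add: visits_Cons)
qed

lemma reach_upto_le_1:
  assumes "\<sigma> \<in> Scheds" "x \<in> S"
  shows "reach_upto n \<sigma> x T \<le> 1"
proof -
  have "reach_upto n \<sigma> x T \<le> expect n \<sigma> x (\<lambda>_. 1)"
    unfolding reach_upto_def by (rule expect_mono[OF assms]) simp
  then show ?thesis using expect_const[OF assms, of n 1] by simp
qed

lemma reach_upto_mono: "\<sigma> \<in> Scheds \<Longrightarrow> x \<in> S \<Longrightarrow> reach_upto n \<sigma> x T \<le> reach_upto (Suc n) \<sigma> x T"
proof (induction n arbitrary: \<sigma> x)
  case 0
  have "0 \<le> (\<Sum>\<alpha>\<in>Act. \<Sum>y\<in>S. \<sigma> x [] \<alpha> * P x \<alpha> y * reach_upto 0 (sched_shift \<sigma> x \<alpha> y) y T)"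
    by (intro sum_nonneg mult_nonneg_nonneg sched_step_nonneg[OF 0]) (auto simp: reach_upto_0)
  then show ?case using reach_upto_Suc[OF 0] by (simp add: reach_upto_0)
next
  case (Suc n)
  have "(\<Sum>\<alpha>\<in>Act. \<Sum>y\<in>S. \<sigma> x [] \<alpha> * P x \<alpha> y * reach_upto n (sched_shift \<sigma> x \<alpha> y) y T) \<le>
        (\<Sum>\<alpha>\<in>Act. \<Sum>y\<in>S. \<sigma> x [] \<alpha> * P x \<alpha> y * reach_upto (Suc n) (sched_shift \<sigma> x \<alpha> y) y T)"
    using Suc.IH[OF sched_shift_in_Scheds[OF Suc.prems]] by (intro sched_step_mono[OF Suc.prems]) auto
  then show ?case unfolding reach_upto_Suc[OF Suc.prems] by simp
qed

lemma reach_upto_tendsto: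
  assumes "\<sigma> \<in> Scheds" "x \<in> S"
  shows "(\<lambda>n. reach_upto n \<sigma> x T) \<longlonglongrightarrow> reach_prob S Act P \<sigma> x T"
proof -
  have "incseq (\<lambda>n. reach_upto n \<sigma> x T)" by (rule incseq_SucI) (use reach_upto_mono[OF assms] in auto)
  moreover have "\<forall>n. reach_upto n \<sigma> x T \<le> 1" using reach_upto_le_1[OF assms] by blast
  ultimately obtain L where "(\<lambda>n. reach_upto n \<sigma> x T) \<longlonglongrightarrow> L" using incseq_convergent by blast
  then show ?thesis unfolding reach_prob_eq_lim using limI by metis
qed

lemma reach_upto_cong_sched: "(\<And>h. \<sigma>1 x h = \<sigma>2 x h) \<Longrightarrow> reach_upto n \<sigma>1 x T = reach_upto n \<sigma>2 x T"
  unfolding reach_upto_def by (rule expect_cong_sched)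

lemma reach_prob_cong_sched:
  "(\<And>h. \<sigma>1 x h = \<sigma>2 x h) \<Longrightarrow> reach_prob S Act P \<sigma>1 x T = reach_prob S Act P \<sigma>2 x T"
  unfolding reach_prob_eq_lim using reach_upto_cong_sched by metis

lemma reach_prob_mix_sched:
  assumes "0 \<le> l" "l \<le> 1" "\<sigma>1 \<in> Scheds" "\<sigma>2 \<in> Scheds" "x \<in> S"
  shows "reach_prob S Act P (mix_sched l P \<sigma>1 \<sigma>2) x T =
         l * reach_prob S Act P \<sigma>1 x T + (1 - l) * reach_prob S Act P \<sigma>2 x T"
proof -
  have "reach_upto n (mix_sched l P \<sigma>1 \<sigma>2) x T = l * reach_upto n \<sigma>1 x T + (1 - l) * reach_upto n \<sigma>2 x T" for n
  proof -
    let ?f = "\<lambda>h. if visits x h T then 1 else (0::real)"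
    have "reach_upto n (mix_sched l P \<sigma>1 \<sigma>2) x T =
          (\<Sum>h\<in>paths_len S Act n. l * (path_prob P \<sigma>1 x h * ?f h) + (1 - l) * (path_prob P \<sigma>2 x h * ?f h))"
      unfolding reach_upto_def expect_def
    proof (rule sum.cong[OF refl])
      fix h assume "h \<in> paths_len S Act n"
      then have "set h \<subseteq> Act \<times> S" by (simp add: paths_len_def)
      then show "path_prob P (mix_sched l P \<sigma>1 \<sigma>2) x h * ?f h =
          l * (path_prob P \<sigma>1 x h * ?f h) + (1 - l) * (path_prob P \<sigma>2 x h * ?f h)"
        unfolding path_prob_def using pp_mix_sched[OF assms] by (simp add: algebra_simps)
    qed
    also have "\<dots> = l * reach_upto n \<sigma>1 x T + (1 - l) * reach_upto n \<sigma>2 x T"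
      unfolding reach_upto_def expect_def by (simp add: sum.distrib sum_distrib_left)
    finally show ?thesis .
  qed
  then have "(\<lambda>n. reach_upto n (mix_sched l P \<sigma>1 \<sigma>2) x T) \<longlonglongrightarrow>
      l * reach_prob S Act P \<sigma>1 x T + (1 - l) * reach_prob S Act P \<sigma>2 x T"
    using reach_upto_tendsto[OF assms(3,5)] reach_upto_tendsto[OF assms(4,5)] by (simp add: tendsto_intros)
  then show ?thesis
    using LIMSEQ_unique reach_upto_tendsto[OF mix_sched_in_Scheds[OF assms(1-4)] assms(5)] by blast
qed

end

section \<open>Transient rewards\<close>

text \<open>A reward is
  \<^emph>\<open>transient\<close> if it vanishes except on states that every transition leaves for a strictly
  higher level, so that it is collected at most once per level along any path; this makes
  the expected total reward converge.\<close>

locale leveled_mdp = mdp S Act P for S :: "'s set" and Act :: "'a set" and P +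
  fixes level :: "'s \<Rightarrow> nat"
  assumes level_mono: "x \<in> S \<Longrightarrow> \<alpha> \<in> Act \<Longrightarrow> 0 < P x \<alpha> y \<Longrightarrow> level x \<le> level y"
begin

definition transient_rew :: "('s \<Rightarrow> real) \<Rightarrow> bool" where
  "transient_rew r \<longleftrightarrow> (\<forall>x\<in>S. r x \<noteq> 0 \<longrightarrow> (\<forall>\<alpha>\<in>Act. \<forall>y. 0 < P x \<alpha> y \<longrightarrow> level x < level y))"

lemma transient_rew_support_subset:
  "transient_rew r \<Longrightarrow> (\<And>x. x \<in> S \<Longrightarrow> r' x \<noteq> 0 \<Longrightarrow> r x \<noteq> 0) \<Longrightarrow> transient_rew r'"
  unfolding transient_rew_def by blast

definition max_level :: nat where "max_level = Max (level ` S)"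

lemma level_le_max_level: "x \<in> S \<Longrightarrow> level x \<le> max_level"
  unfolding max_level_def using finite_S by auto

definition rew_bound :: "('s \<Rightarrow> real) \<Rightarrow> real" where
  "rew_bound r = Max ((\<lambda>x. \<bar>r x\<bar>) ` S)"

lemma abs_rew_le_rew_bound: "x \<in> S \<Longrightarrow> \<bar>r x\<bar> \<le> rew_bound r"
  unfolding rew_bound_def using finite_S by auto

lemma rew_bound_nonneg: "0 \<le> rew_bound r"
  using S_nonempty abs_rew_le_rew_bound[of _ r] by force

definition total_rew_bound :: "('s \<Rightarrow> real) \<Rightarrow> real" where
  "total_rew_bound r = (real max_level + 1) * rew_bound r"

lemma total_rew_upto_abs_le_levels:
  assumes "transient_rew r" "\<sigma> \<in> Scheds" "x \<in> S"
  shows "\<bar>total_rew_upto r n \<sigma> x\<bar> \<le> (real max_level - real (level x) + 1) * rew_bound r"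
  using assms(2,3)
proof (induction n arbitrary: \<sigma> x)
  case 0
  have "1 \<le> real max_level - real (level x) + 1" using level_le_max_level[OF 0(2)] by simp
  then have "rew_bound r \<le> (real max_level - real (level x) + 1) * rew_bound r"
    using rew_bound_nonneg[of r] mult_right_mono[of 1 _ "rew_bound r"] by simp
  then show ?case using abs_rew_le_rew_bound[OF 0(2), of r] by (simp add: total_rew_upto_0)
next
  case (Suc n)
  define c where "c = (if r x = 0 then 0 else 1 :: real)"
  have "\<bar>total_rew_upto r n (sched_shift \<sigma> x \<alpha> y) y\<bar> \<le> (real max_level - real (level x) + 1 - c) * rew_bound r"
    if "\<alpha> \<in> Act" "y \<in> S" "0 < P x \<alpha> y" for \<alpha> y
  proof -
    have "level x \<le> level y" "r x \<noteq> 0 \<Longrightarrow> level x < level y"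
      using level_mono[OF Suc.prems(2) that(1,3)] assms(1) Suc.prems(2) that by (auto simp: transient_rew_def)
    then have "real max_level - real (level y) + 1 \<le> real max_level - real (level x) + 1 - c"
      by (auto simp: c_def)
    then show ?thesis
      using Suc.IH[OF sched_shift_in_Scheds[OF Suc.prems that(1,2)] that(2)] rew_bound_nonneg[of r]
      by (meson mult_right_mono order_trans)
  qed
  then have "\<bar>\<Sum>\<alpha>\<in>Act. \<Sum>y\<in>S. \<sigma> x [] \<alpha> * P x \<alpha> y * total_rew_upto r n (sched_shift \<sigma> x \<alpha> y) y\<bar>
      \<le> (real max_level - real (level x) + 1 - c) * rew_bound r"
    by (rule sched_step_abs_le[OF Suc.prems])
  moreover have "\<bar>r x\<bar> \<le> c * rew_bound r"
    using abs_rew_le_rew_bound[OF Suc.prems(2), of r] by (auto simp: c_def)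
  moreover have "(real max_level - real (level x) + 1 - c) * rew_bound r + c * rew_bound r =
                 (real max_level - real (level x) + 1) * rew_bound r"
    by (simp add: algebra_simps)
  ultimately show ?case
    unfolding total_rew_upto_Suc[OF Suc.prems] by (smt (verit) abs_triangle_ineq)
qed

lemma total_rew_upto_abs_le:
  assumes "transient_rew r" "\<sigma> \<in> Scheds" "x \<in> S"
  shows "\<bar>total_rew_upto r n \<sigma> x\<bar> \<le> total_rew_bound r"
proof -
  have "(real max_level - real (level x) + 1) * rew_bound r \<le> (real max_level + 1) * rew_bound r"
    using rew_bound_nonneg[of r] by (simp add: mult_right_mono)
  then show ?thesis
    using total_rew_upto_abs_le_levels[OF assms, of n] unfolding total_rew_bound_def by linarith
qed

lemma convergent_total_rew_upto_nonneg:
  assumes "transient_rew r" "\<And>x. x \<in> S \<Longrightarrow> 0 \<le> r x" "\<sigma> \<in> Scheds" "x \<in> S"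
  shows "convergent (\<lambda>n. total_rew_upto r n \<sigma> x)"
proof -
  have "incseq (\<lambda>n. total_rew_upto r n \<sigma> x)"
    by (rule incseq_SucI) (use total_rew_upto_mono_nonneg[OF assms(2-4)] in auto)
  moreover have "total_rew_upto r n \<sigma> x \<le> total_rew_bound r" for n
    using total_rew_upto_abs_le[OF assms(1,3,4)] by (meson abs_le_D1)
  ultimately show ?thesis
    using incseq_convergent[of _ "total_rew_bound r"] convergent_def by blast
qed

text \<open>Split into positive and negative part, each of which has monotone partial sums.\<close>

lemma convergent_total_rew_upto:
  assumes "transient_rew r" "\<sigma> \<in> Scheds" "x \<in> S"
  shows "convergent (\<lambda>n. total_rew_upto r n \<sigma> x)"
proof -
  have "convergent (\<lambda>n. total_rew_upto (\<lambda>x. max (r x) 0) n \<sigma> x - total_rew_upto (\<lambda>x. max (- r x) 0) n \<sigma> x)"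
    by (intro convergent_diff convergent_total_rew_upto_nonneg transient_rew_support_subset[OF assms(1)]
          assms(2,3)) auto
  moreover have "(\<lambda>x. max (r x) 0 - max (- r x) 0) = r" by (auto simp: fun_eq_iff)
  ultimately show ?thesis by (simp only: total_rew_upto_diff[symmetric])
qed

lemma total_rew_upto_tendsto:
  "transient_rew r \<Longrightarrow> \<sigma> \<in> Scheds \<Longrightarrow> x \<in> S \<Longrightarrow> (\<lambda>n. total_rew_upto r n \<sigma> x) \<longlonglongrightarrow> total_rew r \<sigma> x"
  unfolding total_rew_eq_lim using convergent_total_rew_upto convergent_LIMSEQ_iff by blast

lemma total_rew_abs_le:
  assumes "transient_rew r" "\<sigma> \<in> Scheds" "x \<in> S"
  shows "\<bar>total_rew r \<sigma> x\<bar> \<le> total_rew_bound r"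
  using tendsto_rabs[OF total_rew_upto_tendsto[OF assms]] total_rew_upto_abs_le[OF assms]
  by (intro LIMSEQ_le_const2) auto

lemma total_rew_step:
  assumes "transient_rew r" "\<sigma> \<in> Scheds" "x \<in> S"
  shows "total_rew r \<sigma> x =
         r x + (\<Sum>\<alpha>\<in>Act. \<Sum>y\<in>S. \<sigma> x [] \<alpha> * P x \<alpha> y * total_rew r (sched_shift \<sigma> x \<alpha> y) y)"
proof -
  have "(\<lambda>n. total_rew_upto r (Suc n) \<sigma> x) \<longlonglongrightarrow>
        r x + (\<Sum>\<alpha>\<in>Act. \<Sum>y\<in>S. \<sigma> x [] \<alpha> * P x \<alpha> y * total_rew r (sched_shift \<sigma> x \<alpha> y) y)"
    unfolding total_rew_upto_Suc[OF assms(2,3)]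
    by (intro tendsto_intros total_rew_upto_tendsto assms sched_shift_in_Scheds) auto
  then show ?thesis
    using LIMSEQ_unique LIMSEQ_Suc[OF total_rew_upto_tendsto[OF assms]] by blast
qed

lemma total_rew_memoryless_step:
  assumes "transient_rew r" "\<And>y. y \<in> S \<Longrightarrow> d y \<in> en y" "x \<in> S"
  shows "total_rew r (memoryless d) x = r x + (\<Sum>y\<in>S. P x (d x) y * total_rew r (memoryless d) y)"
proof -
  have "total_rew r (sched_shift (memoryless d) x \<beta> y) y = total_rew r (memoryless d) y" for \<beta> y
    by (rule total_rew_cong_sched) (rule sched_shift_memoryless)
  then have "total_rew r (memoryless d) x =
      r x + (\<Sum>\<beta>\<in>Act. \<Sum>y\<in>S. memoryless d x [] \<beta> * P x \<beta> y * total_rew r (memoryless d) y)"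
    using total_rew_step[OF assms(1) memoryless_in_Scheds[OF assms(2)] assms(3)] by simp
  also have "\<dots> = r x + (\<Sum>\<beta>\<in>Act. if \<beta> = d x then \<Sum>y\<in>S. P x (d x) y * total_rew r (memoryless d) y else 0)"
    by (auto intro!: sum.cong simp: memoryless_Nil)
  finally show ?thesis using assms(2,3) en_subset finite_Act by auto
qed

lemma total_rew_upto_memoryless_Suc:
  assumes "\<And>y. y \<in> S \<Longrightarrow> d y \<in> en y" "x \<in> S"
  shows "total_rew_upto r (Suc n) (memoryless d) x =
         r x + (\<Sum>y\<in>S. P x (d x) y * total_rew_upto r n (memoryless d) y)"
proof -
  have "total_rew_upto r n (sched_shift (memoryless d) x \<beta> y) y = total_rew_upto r n (memoryless d) y" for \<beta> y
    by (rule total_rew_upto_cong_sched) (rule sched_shift_memoryless)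
  then have "total_rew_upto r (Suc n) (memoryless d) x =
      r x + (\<Sum>\<beta>\<in>Act. \<Sum>y\<in>S. memoryless d x [] \<beta> * P x \<beta> y * total_rew_upto r n (memoryless d) y)"
    using total_rew_upto_Suc[OF memoryless_in_Scheds[OF assms(1)] assms(2)] by simp
  also have "\<dots> = r x + (\<Sum>\<beta>\<in>Act. if \<beta> = d x then \<Sum>y\<in>S. P x (d x) y * total_rew_upto r n (memoryless d) y else 0)"
    by (auto intro!: sum.cong simp: memoryless_Nil)
  finally show ?thesis using assms en_subset finite_Act by auto
qed

lemma total_rew_memoryless_closed_rew_free:
  assumes "transient_rew r" "\<And>y. y \<in> S \<Longrightarrow> d y \<in> en y" "R \<subseteq> S" "\<And>w. w \<in> R \<Longrightarrow> r w = 0"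
    and "\<And>w u. w \<in> R \<Longrightarrow> 0 < P w (d w) u \<Longrightarrow> u \<in> R" "x \<in> R"
  shows "total_rew r (memoryless d) x = 0"
proof -
  have "\<forall>w\<in>R. total_rew_upto r n (memoryless d) w = 0" for n
  proof (induction n)
    case 0
    then show ?case using assms(4) by (simp add: total_rew_upto_0)
  next
    case (Suc n)
    have "total_rew_upto r (Suc n) (memoryless d) w = 0" if w: "w \<in> R" for w
    proof -
      have wS: "w \<in> S" using w assms(3) by blast
      have "P w (d w) y * total_rew_upto r n (memoryless d) y = 0" if "y \<in> S" for y
      proof (cases "0 < P w (d w) y")
        case True
        then show ?thesis using Suc.IH assms(5)[OF w] by simp
      next
        case False
        then show ?thesis using P_nonneg[OF wS, of "d w" y] assms(2)[OF wS] en_subset by force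
      qed
      then have "(\<Sum>y\<in>S. P w (d w) y * total_rew_upto r n (memoryless d) y) = 0" by (simp add: sum.neutral)
      then show ?thesis using total_rew_upto_memoryless_Suc[OF assms(2) wS, of r n] assms(4)[OF w] by simp
    qed
    then show ?case by blast
  qed
  then have "(\<lambda>n. total_rew_upto r n (memoryless d) x) \<longlonglongrightarrow> 0" using assms(6) by simp
  moreover have "(\<lambda>n. total_rew_upto r n (memoryless d) x) \<longlonglongrightarrow> total_rew r (memoryless d) x"
    using total_rew_upto_tendsto[OF assms(1) memoryless_in_Scheds[OF assms(2)]] assms(3,6) by blast
  ultimately show ?thesis using LIMSEQ_unique by blast
qed

definition top_level :: "'s set \<Rightarrow> 's set" where
  "top_level Z = {w\<in>Z. level w = Max (level ` Z)}"

lemma top_level_subset: "top_level Z \<subseteq> Z"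
  unfolding top_level_def by blast

lemma top_level_nonempty: "finite Z \<Longrightarrow> z \<in> Z \<Longrightarrow> top_level Z \<noteq> {}"
  unfolding top_level_def using Max_in[of "level ` Z"] by fastforce

lemma top_level_closed:
  assumes "Z \<subseteq> S" "finite Z" "\<And>y. y \<in> S \<Longrightarrow> d y \<in> en y"
    and "\<And>w u. w \<in> Z \<Longrightarrow> 0 < P w (d w) u \<Longrightarrow> u \<in> Z"
    and "w \<in> top_level Z" "0 < P w (d w) u"
  shows "u \<in> top_level Z"
proof -
  have w: "w \<in> Z" "w \<in> S" "level w = Max (level ` Z)" using assms(1,5) unfolding top_level_def by auto
  have u: "u \<in> Z" using assms(4)[OF w(1) assms(6)] .
  have "level w \<le> level u" using level_mono[OF w(2) _ assms(6)] assms(3)[OF w(2)] en_subset by blast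
  moreover have "level u \<le> Max (level ` Z)" using Max_ge[OF finite_imageI[OF assms(2)] imageI[OF u]] .
  ultimately show ?thesis using u w(3) unfolding top_level_def by simp
qed

text \<open>\<open>d\<close> keeps the states of maximal level at that level, so transient rewards vanish there.\<close>

lemma top_level_rew_zero:
  assumes "transient_rew r" "Z \<subseteq> S" "finite Z" "\<And>y. y \<in> S \<Longrightarrow> d y \<in> en y"
    and "\<And>w u. w \<in> Z \<Longrightarrow> 0 < P w (d w) u \<Longrightarrow> u \<in> Z" and w: "w \<in> top_level Z"
  shows "r w = 0"
proof (rule ccontr)
  assume "r w \<noteq> 0"
  have wS: "w \<in> S" using w assms(2) top_level_subset by blast
  obtain u where u: "0 < P w (d w) u" using en_has_successor[OF wS assms(4)[OF wS]] by blast
  have "d w \<in> Act" using assms(4)[OF wS] en_subset by blast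
  then have "level w < level u" using assms(1) wS \<open>r w \<noteq> 0\<close> u unfolding transient_rew_def by blast
  moreover have "u \<in> top_level Z" using top_level_closed[OF assms(2-5) w u] .
  ultimately show False using w unfolding top_level_def by simp
qed

end

section \<open>Optimal values and an optimal memoryless scheduler\<close>

locale transient_rew_mdp = leveled_mdp S Act P level
  for S :: "'s set" and Act :: "'a set" and P level +
  fixes r :: "'s \<Rightarrow> real"
  assumes transient: "transient_rew r"
begin

definition val :: "'s \<Rightarrow> real" where "val x = (SUP \<sigma>\<in>Scheds. total_rew r \<sigma> x)"

lemma bdd_above_total_rew: "x \<in> S \<Longrightarrow> bdd_above ((\<lambda>\<sigma>. total_rew r \<sigma> x) ` Scheds)"
  by (rule bdd_aboveI2[where M = "total_rew_bound r"])
     (use total_rew_abs_le[OF transient] in \<open>auto simp: abs_le_iff\<close>)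

lemma total_rew_le_val: "\<sigma> \<in> Scheds \<Longrightarrow> x \<in> S \<Longrightarrow> total_rew r \<sigma> x \<le> val x"
  unfolding val_def by (rule cSUP_upper[OF _ bdd_above_total_rew])

lemma val_approx:
  assumes "x \<in> S" "0 < e"
  obtains \<sigma> where "\<sigma> \<in> Scheds" "val x - e < total_rew r \<sigma> x"
proof -
  have "val x - e < (SUP \<sigma>\<in>Scheds. total_rew r \<sigma> x)" using assms(2) by (simp add: val_def)
  then show thesis using less_cSUP_iff[OF Scheds_nonempty bdd_above_total_rew[OF assms(1)]] that by blast
qed

definition qval :: "'s \<Rightarrow> 'a \<Rightarrow> real" where "qval x \<alpha> = (\<Sum>y\<in>S. P x \<alpha> y * val y)"

lemma total_rew_le_qval:
  assumes "\<sigma> \<in> Scheds" "x \<in> S"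
  shows "total_rew r \<sigma> x \<le> r x + (\<Sum>\<alpha>\<in>Act. \<sigma> x [] \<alpha> * qval x \<alpha>)"
proof -
  have "(\<Sum>\<alpha>\<in>Act. \<Sum>y\<in>S. \<sigma> x [] \<alpha> * P x \<alpha> y * total_rew r (sched_shift \<sigma> x \<alpha> y) y) \<le>
        (\<Sum>\<alpha>\<in>Act. \<Sum>y\<in>S. \<sigma> x [] \<alpha> * P x \<alpha> y * val y)"
    by (intro sched_step_mono[OF assms] total_rew_le_val sched_shift_in_Scheds assms)
  also have "\<dots> = (\<Sum>\<alpha>\<in>Act. \<sigma> x [] \<alpha> * qval x \<alpha>)"
    by (simp add: qval_def sum_distrib_left mult.assoc)
  finally show ?thesis unfolding total_rew_step[OF transient assms] by simp
qed

lemma total_rew_first_then: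
  assumes "x \<in> S" "\<alpha> \<in> en x" "\<And>y. y \<in> S \<Longrightarrow> \<tau> y \<in> Scheds"
  shows "total_rew r (first_then x \<alpha> \<tau> default_sched) x = r x + (\<Sum>y\<in>S. P x \<alpha> y * total_rew r (\<tau> y) y)"
proof -
  let ?\<sigma> = "first_then x \<alpha> \<tau> default_sched"
  have "total_rew r (sched_shift ?\<sigma> x \<beta> y) y = total_rew r (\<tau> y) y" for \<beta> y
    by (rule total_rew_cong_sched) (simp add: sched_shift_def first_then_def)
  then have "total_rew r ?\<sigma> x = r x + (\<Sum>\<beta>\<in>Act. \<Sum>y\<in>S. ?\<sigma> x [] \<beta> * P x \<beta> y * total_rew r (\<tau> y) y)"
    using total_rew_step[OF transient first_then_in_Scheds[OF assms] assms(1)] by simp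
  also have "\<dots> = r x + (\<Sum>\<beta>\<in>Act. if \<beta> = \<alpha> then \<Sum>y\<in>S. P x \<alpha> y * total_rew r (\<tau> y) y else 0)"
    by (auto intro!: sum.cong simp: first_then_def)
  finally show ?thesis using assms(2) en_subset finite_Act by auto
qed

text \<open>Play \<open>\<alpha>\<close> and continue \<open>e\<close>-optimally from every successor.\<close>

lemma qval_le_val:
  assumes "x \<in> S" "\<alpha> \<in> en x"
  shows "r x + qval x \<alpha> \<le> val x"
proof (rule field_le_epsilon)
  fix e :: real assume e: "0 < e"
  define \<tau> where "\<tau> y = (SOME \<sigma>. \<sigma> \<in> Scheds \<and> val y - e < total_rew r \<sigma> y)" for y
  have \<tau>: "\<tau> y \<in> Scheds \<and> val y - e < total_rew r (\<tau> y) y" if "y \<in> S" for y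
  proof -
    have "\<exists>\<sigma>. \<sigma> \<in> Scheds \<and> val y - e < total_rew r \<sigma> y" using val_approx[OF that e] by metis
    then show ?thesis unfolding \<tau>_def by (rule someI_ex)
  qed
  have "r x + qval x \<alpha> - e = r x + (\<Sum>y\<in>S. P x \<alpha> y * (val y - e))"
    using sum_P_en[OF assms(2)]
    by (simp add: qval_def right_diff_distrib sum_subtractf sum_distrib_right[symmetric])
  also have "\<dots> \<le> r x + (\<Sum>y\<in>S. P x \<alpha> y * total_rew r (\<tau> y) y)"
  proof (intro add_left_mono sum_mono mult_left_mono)
    fix y assume "y \<in> S"
    then show "val y - e \<le> total_rew r (\<tau> y) y" using \<tau> by (simp add: less_imp_le)
    show "0 \<le> P x \<alpha> y" using P_nonneg[OF assms(1)] assms(2) en_subset by blast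
  qed
  also have "\<dots> = total_rew r (first_then x \<alpha> \<tau> default_sched) x"
    using total_rew_first_then[OF assms] \<tau> by simp
  also have "\<dots> \<le> val x"
    using total_rew_le_val[OF first_then_in_Scheds[OF assms] assms(1)] \<tau> by blast
  finally show "r x + qval x \<alpha> \<le> val x + e" by simp
qed

lemma val_eq_max_qval:
  assumes "x \<in> S"
  shows "\<exists>\<alpha>\<in>en x. r x + qval x \<alpha> = val x"
proof -
  obtain \<alpha>0 where \<alpha>0: "\<alpha>0 \<in> en x" "qval x \<alpha>0 = Max (qval x ` en x)"
  proof -
    have "Max (qval x ` en x) \<in> qval x ` en x" using finite_en en_nonempty[OF assms] by (intro Max_in) auto
    then show thesis using that by (metis imageE)
  qed
  have le_\<alpha>0: "qval x \<alpha> \<le> qval x \<alpha>0" if "\<alpha> \<in> en x" for \<alpha>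
    unfolding \<alpha>0(2) using finite_en that by simp
  have "val x \<le> r x + qval x \<alpha>0"
    unfolding val_def
  proof (rule cSUP_least[OF Scheds_nonempty])
    fix \<sigma> assume \<sigma>: "\<sigma> \<in> Scheds"
    have "(\<Sum>\<alpha>\<in>Act. \<sigma> x [] \<alpha> * qval x \<alpha>) \<le> (\<Sum>\<alpha>\<in>Act. \<sigma> x [] \<alpha> * qval x \<alpha>0)"
    proof (rule sum_mono)
      fix \<alpha> show "\<sigma> x [] \<alpha> * qval x \<alpha> \<le> \<sigma> x [] \<alpha> * qval x \<alpha>0"
        using le_\<alpha>0 sched_nonneg[OF \<sigma> assms, of "[]"] sched_disabled[OF \<sigma> assms, of "[]" \<alpha>]
        by (cases "\<alpha> \<in> en x") (simp_all add: mult_left_mono)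
    qed
    also have "\<dots> = qval x \<alpha>0"
      using sched_sum[OF \<sigma> assms, of "[]"] by (simp add: sum_distrib_right[symmetric])
    finally show "total_rew r \<sigma> x \<le> r x + qval x \<alpha>0" using total_rew_le_qval[OF \<sigma> assms] by simp
  qed
  then show ?thesis using qval_le_val[OF assms \<alpha>0(1)] \<alpha>0(1) by force
qed

definition opt_acts :: "'s \<Rightarrow> 'a set" where
  "opt_acts x = {\<alpha>\<in>en x. r x + qval x \<alpha> = val x}"

lemma opt_acts_nonempty: "x \<in> S \<Longrightarrow> opt_acts x \<noteq> {}"
  using val_eq_max_qval unfolding opt_acts_def by blast

lemma opt_acts_subset: "opt_acts x \<subseteq> en x"
  unfolding opt_acts_def by blast

fun attr_upto :: "nat \<Rightarrow> 's set" where
  "attr_upto 0 = {x\<in>S. r x \<noteq> 0}"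
| "attr_upto (Suc n) = attr_upto n \<union> {x\<in>S. \<exists>\<alpha>\<in>opt_acts x. \<exists>y\<in>attr_upto n. 0 < P x \<alpha> y}"

definition attr :: "'s set" where "attr = (\<Union>n. attr_upto n)"

definition attr_rank :: "'s \<Rightarrow> nat" where "attr_rank x = (LEAST n. x \<in> attr_upto n)"

lemma attr_step:
  assumes "x \<in> attr" "r x = 0"
  shows "\<exists>\<alpha>. \<alpha> \<in> opt_acts x \<and> (\<exists>y\<in>attr. 0 < P x \<alpha> y \<and> attr_rank y < attr_rank x)"
proof -
  obtain n where "x \<in> attr_upto n" using assms(1) unfolding attr_def by blast
  then have x: "x \<in> attr_upto (attr_rank x)" unfolding attr_rank_def by (rule LeastI)
  obtain m where m: "attr_rank x = Suc m"
    using x assms(2) by (cases "attr_rank x") auto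
  have "x \<notin> attr_upto m" using not_less_Least[of m "\<lambda>n. x \<in> attr_upto n"] m unfolding attr_rank_def by simp
  then obtain \<alpha> y where \<alpha>y: "\<alpha> \<in> opt_acts x" "y \<in> attr_upto m" "0 < P x \<alpha> y" using x m by auto
  have "attr_rank y \<le> m" unfolding attr_rank_def using \<alpha>y(2) by (rule Least_le)
  then show ?thesis using \<alpha>y m unfolding attr_def by force
qed

lemma attr_predecessor:
  assumes "y \<in> S" "\<alpha> \<in> opt_acts y" "0 < P y \<alpha> u" "u \<in> attr"
  shows "y \<in> attr"
proof -
  obtain n where "u \<in> attr_upto n" using assms(4) unfolding attr_def by blast
  then have "y \<in> attr_upto (Suc n)" using assms(1-3) by auto
  then show ?thesis unfolding attr_def by blast
qed

lemma rew_outside_attr: "x \<in> S \<Longrightarrow> x \<notin> attr \<Longrightarrow> r x = 0"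
  unfolding attr_def by (metis (mono_tags, lifting) UNIV_I UN_I attr_upto.simps(1) mem_Collect_eq)

lemma opt_successor_outside_attr:
  assumes "y \<in> S" "y \<notin> attr" "\<alpha> \<in> opt_acts y" "0 < P y \<alpha> u"
  shows "u \<in> S" "u \<notin> attr"
  using P_pos_in_S[OF assms(1) _ assms(4)] attr_predecessor[OF assms(1,3,4)] assms(2,3)
    opt_acts_subset en_subset by blast+

definition opt_policy :: "'s \<Rightarrow> 'a" where
  "opt_policy x =
     (if x \<in> attr \<and> r x = 0
      then SOME \<alpha>. \<alpha> \<in> opt_acts x \<and> (\<exists>y\<in>attr. 0 < P x \<alpha> y \<and> attr_rank y < attr_rank x)
      else SOME \<alpha>. \<alpha> \<in> opt_acts x)"

lemma opt_policy_descends: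
  assumes "x \<in> attr" "r x = 0"
  shows "opt_policy x \<in> opt_acts x \<and> (\<exists>y\<in>attr. 0 < P x (opt_policy x) y \<and> attr_rank y < attr_rank x)"
  using someI_ex[OF attr_step[OF assms]] assms unfolding opt_policy_def by simp

lemma opt_policy_opt:
  assumes "x \<in> S"
  shows "opt_policy x \<in> opt_acts x"
proof (cases "x \<in> attr \<and> r x = 0")
  case False
  have "\<exists>\<alpha>. \<alpha> \<in> opt_acts x" using opt_acts_nonempty[OF assms] by blast
  then show ?thesis using someI_ex[of "\<lambda>\<alpha>. \<alpha> \<in> opt_acts x"] False unfolding opt_policy_def by auto
qed (use opt_policy_descends in blast)

lemma opt_policy_en: "x \<in> S \<Longrightarrow> opt_policy x \<in> en x"
  using opt_policy_opt opt_acts_subset by blast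

lemma opt_policy_leaves_closed_set:
  assumes "R \<subseteq> S" "\<And>w u. w \<in> R \<Longrightarrow> 0 < P w (opt_policy w) u \<Longrightarrow> u \<in> R"
  shows "x \<in> R \<Longrightarrow> x \<in> attr \<Longrightarrow> \<exists>w\<in>R. r w \<noteq> 0"
proof (induction "attr_rank x" arbitrary: x rule: less_induct)
  case less
  show ?case
  proof (cases "r x = 0")
    case True
    then obtain y where "y \<in> attr" "0 < P x (opt_policy x) y" "attr_rank y < attr_rank x"
      using opt_policy_descends[of x] less.prems by blast
    then show ?thesis using less.hyps assms(2)[OF less.prems(1)] by blast
  qed (use less.prems in blast)
qed

text \<open>A reward-free set \<open>Z\<close> of value \<open>M\<close>, closed under optimal actions, where every non-optimal
  action loses at least \<open>\<eta>\<close>: a scheduler either deviates, losing \<open>\<eta>\<close>, or collects no reward at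
  all. Balancing both bounds on the total reward shows \<open>M \<le> 0\<close>.\<close>

context
  fixes Z :: "'s set" and M \<eta> :: real
  assumes trap_subset: "Z \<subseteq> S"
    and trap_rew: "\<And>y. y \<in> Z \<Longrightarrow> r y = 0"
    and trap_val: "\<And>y. y \<in> Z \<Longrightarrow> val y = M"
    and trap_closed: "\<And>y \<alpha> u. y \<in> Z \<Longrightarrow> \<alpha> \<in> opt_acts y \<Longrightarrow> 0 < P y \<alpha> u \<Longrightarrow> u \<in> Z"
    and trap_gap: "\<And>y \<alpha>. y \<in> Z \<Longrightarrow> \<alpha> \<in> en y \<Longrightarrow> \<alpha> \<notin> opt_acts y \<Longrightarrow> qval y \<alpha> \<le> M - \<eta>"
    and trap_gap_pos: "0 < \<eta>"
begin

lemma trap_nonopt_action_bound: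
  assumes "\<sigma> \<in> Scheds" "y \<in> Z" "\<alpha> \<in> Act" "\<alpha> \<notin> opt_acts y"
  shows "(\<Sum>u\<in>S. \<sigma> y [] \<alpha> * P y \<alpha> u * total_rew r (sched_shift \<sigma> y \<alpha> u) u) \<le>
         (\<Sum>u\<in>S. \<sigma> y [] \<alpha> * P y \<alpha> u * (M - \<eta>))"
proof (cases "\<alpha> \<in> en y")
  case True
  have y: "y \<in> S" using assms(2) trap_subset by blast
  have "(\<Sum>u\<in>S. \<sigma> y [] \<alpha> * P y \<alpha> u * total_rew r (sched_shift \<sigma> y \<alpha> u) u) \<le>
        (\<Sum>u\<in>S. \<sigma> y [] \<alpha> * P y \<alpha> u * val u)"
    by (intro sched_action_mono[OF assms(1) y assms(3)] total_rew_le_val sched_shift_in_Scheds assms(1,3) y)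
  also have "\<dots> = \<sigma> y [] \<alpha> * qval y \<alpha>" by (simp add: qval_def sum_distrib_left mult.assoc)
  also have "\<dots> \<le> \<sigma> y [] \<alpha> * (M - \<eta>)"
    using trap_gap[OF assms(2) True assms(4)] sched_nonneg[OF assms(1) y, of "[]"] by (simp add: mult_left_mono)
  also have "\<dots> = (\<Sum>u\<in>S. \<sigma> y [] \<alpha> * P y \<alpha> u * (M - \<eta>))"
    using sum_P_en[OF True] by (simp add: sum_distrib_left[symmetric] sum_distrib_right[symmetric] mult.assoc)
  finally show ?thesis .
next
  case False
  have "y \<in> S" using assms(2) trap_subset by blast
  then show ?thesis using sched_disabled[OF assms(1) \<open>y \<in> S\<close>, of "[]" \<alpha>] False by simp
qed

lemma total_rew_le_trap_deviation:
  "\<sigma> \<in> Scheds \<Longrightarrow> y \<in> Z \<Longrightarrow> total_rew r \<sigma> y \<le> M - \<eta> * deviation_prob Z opt_acts n \<sigma> y"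
proof (induction n arbitrary: \<sigma> y)
  case 0
  then show ?case using total_rew_le_val trap_subset trap_val by (auto simp: deviation_prob_0)
next
  case (Suc n)
  have y: "y \<in> S" using Suc.prems trap_subset by blast
  let ?d = "\<lambda>\<alpha> u. if \<alpha> \<in> opt_acts y then deviation_prob Z opt_acts n (sched_shift \<sigma> y \<alpha> u) u else 1"
  have "(\<Sum>u\<in>S. \<sigma> y [] \<alpha> * P y \<alpha> u * total_rew r (sched_shift \<sigma> y \<alpha> u) u) \<le>
        (\<Sum>u\<in>S. \<sigma> y [] \<alpha> * P y \<alpha> u * (M + - \<eta> * ?d \<alpha> u))" if \<alpha>: "\<alpha> \<in> Act" for \<alpha>
  proof (cases "\<alpha> \<in> opt_acts y")
    case True
    show ?thesis
      using Suc.IH[OF sched_shift_in_Scheds[OF Suc.prems(1) y \<alpha>] trap_closed[OF Suc.prems(2) True]] True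
      by (intro sched_action_mono[OF Suc.prems(1) y \<alpha>]) simp
  qed (use trap_nonopt_action_bound[OF Suc.prems \<alpha>] in simp)
  then have "(\<Sum>\<alpha>\<in>Act. \<Sum>u\<in>S. \<sigma> y [] \<alpha> * P y \<alpha> u * total_rew r (sched_shift \<sigma> y \<alpha> u) u) \<le>
             M + (\<Sum>\<alpha>\<in>Act. \<Sum>u\<in>S. \<sigma> y [] \<alpha> * P y \<alpha> u * (- \<eta> * ?d \<alpha> u))"
    unfolding sched_step_sum_plus_const[OF Suc.prems(1) y, symmetric] by (rule sum_mono)
  also have "\<dots> = M - \<eta> * deviation_prob Z opt_acts (Suc n) \<sigma> y"
    unfolding deviation_prob_Suc[OF Suc.prems(2,1) y]
    by (simp add: sum_distrib_left mult.assoc mult.left_commute sum_negf)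
  finally show ?case unfolding total_rew_step[OF transient Suc.prems(1) y] trap_rew[OF Suc.prems(2)] by simp
qed

lemma total_rew_upto_le_trap_deviation:
  "\<sigma> \<in> Scheds \<Longrightarrow> y \<in> Z \<Longrightarrow>
   total_rew_upto r n \<sigma> y \<le> total_rew_bound r * deviation_prob Z opt_acts n \<sigma> y"
proof (induction n arbitrary: \<sigma> y)
  case 0
  then show ?case using trap_rew by (simp add: deviation_prob_0 total_rew_upto_0)
next
  case (Suc n)
  have y: "y \<in> S" using Suc.prems trap_subset by blast
  have "(\<Sum>\<alpha>\<in>Act. \<Sum>u\<in>S. \<sigma> y [] \<alpha> * P y \<alpha> u * total_rew_upto r n (sched_shift \<sigma> y \<alpha> u) u) \<le>
        (\<Sum>\<alpha>\<in>Act. \<Sum>u\<in>S. \<sigma> y [] \<alpha> * P y \<alpha> u * (total_rew_bound r *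
           (if \<alpha> \<in> opt_acts y then deviation_prob Z opt_acts n (sched_shift \<sigma> y \<alpha> u) u else 1)))"
  proof (rule sched_step_mono[OF Suc.prems(1) y])
    fix \<alpha> u assume \<alpha>u: "\<alpha> \<in> Act" "u \<in> S" "0 < P y \<alpha> u"
    show "total_rew_upto r n (sched_shift \<sigma> y \<alpha> u) u \<le> total_rew_bound r *
        (if \<alpha> \<in> opt_acts y then deviation_prob Z opt_acts n (sched_shift \<sigma> y \<alpha> u) u else 1)"
      using Suc.IH[OF sched_shift_in_Scheds[OF Suc.prems(1) y \<alpha>u(1,2)]] trap_closed[OF Suc.prems(2) _ \<alpha>u(3)]
        total_rew_upto_abs_le[OF transient sched_shift_in_Scheds[OF Suc.prems(1) y \<alpha>u(1,2)] \<alpha>u(2), of n]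
      by auto
  qed
  also have "\<dots> = total_rew_bound r * deviation_prob Z opt_acts (Suc n) \<sigma> y"
    unfolding deviation_prob_Suc[OF Suc.prems(2,1) y] by (simp add: sum_distrib_left mult.assoc mult.left_commute)
  finally show ?case unfolding total_rew_upto_Suc[OF Suc.prems(1) y] trap_rew[OF Suc.prems(2)] by simp
qed

lemma total_rew_le_trap_bound:
  assumes \<sigma>: "\<sigma> \<in> Scheds" and y: "y \<in> Z"
  shows "total_rew r \<sigma> y * (total_rew_bound r + \<eta>) \<le> total_rew_bound r * M"
proof -
  let ?K = "total_rew_bound r" and ?\<rho> = "\<lambda>n. deviation_prob Z opt_acts n \<sigma> y"
  have yS: "y \<in> S" using y trap_subset by blast
  have K: "0 \<le> ?K" unfolding total_rew_bound_def using rew_bound_nonneg by simp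
  have "incseq ?\<rho>" by (rule incseq_SucI) (use deviation_prob_mono[OF \<sigma> yS] in auto)
  then obtain t where t: "?\<rho> \<longlonglongrightarrow> t" and le_t: "\<And>n. ?\<rho> n \<le> t"
    using incseq_convergent[of ?\<rho> 1] deviation_prob_le_1[OF \<sigma> yS] by blast
  have "(\<lambda>n. M - \<eta> * ?\<rho> n) \<longlonglongrightarrow> M - \<eta> * t" by (intro tendsto_intros t)
  then have A: "total_rew r \<sigma> y \<le> M - \<eta> * t"
    by (rule LIMSEQ_le_const) (use total_rew_le_trap_deviation[OF \<sigma> y] in blast)
  have B: "total_rew r \<sigma> y \<le> ?K * t"
    using total_rew_upto_le_trap_deviation[OF \<sigma> y] le_t K
    by (intro LIMSEQ_le_const2[OF total_rew_upto_tendsto[OF transient \<sigma> yS]]) (meson mult_left_mono order_trans)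
  have pos: "0 < ?K + \<eta>" using K trap_gap_pos by simp
  show ?thesis
  proof (cases "t * (?K + \<eta>) \<le> M")
    case True
    have "total_rew r \<sigma> y * (?K + \<eta>) \<le> ?K * t * (?K + \<eta>)" using B pos by (simp add: mult_right_mono)
    also have "\<dots> = ?K * (t * (?K + \<eta>))" by simp
    also have "\<dots> \<le> ?K * M" using True K by (simp add: mult_left_mono)
    finally show ?thesis .
  next
    case False
    have "total_rew r \<sigma> y * (?K + \<eta>) \<le> (M - \<eta> * t) * (?K + \<eta>)" using A pos by (simp add: mult_right_mono)
    also have "\<dots> = ?K * M + \<eta> * (M - t * (?K + \<eta>))" by (simp add: algebra_simps)
    also have "\<dots> \<le> ?K * M" using False trap_gap_pos by (simp add: mult_nonneg_nonpos)
    finally show ?thesis .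
  qed
qed

lemma trap_val_nonpos:
  assumes "y \<in> Z"
  shows "M \<le> 0"
proof -
  let ?K = "total_rew_bound r"
  have pos: "0 < ?K + \<eta>"
    using rew_bound_nonneg trap_gap_pos unfolding total_rew_bound_def by (simp add: add_nonneg_pos)
  have "val y \<le> ?K * M / (?K + \<eta>)"
    unfolding val_def
    by (rule cSUP_least[OF Scheds_nonempty]) (simp add: pos_le_divide_eq[OF pos] total_rew_le_trap_bound assms)
  then have "val y * (?K + \<eta>) \<le> ?K * M" by (simp only: pos_le_divide_eq[OF pos])
  then have "M * \<eta> \<le> 0" using trap_val[OF assms] by (simp add: algebra_simps)
  then show ?thesis using trap_gap_pos by (simp add: mult_le_0_iff)
qed

end

lemma uniform_nonopt_gap:
  obtains \<eta> where "0 < \<eta>" "\<And>y \<alpha>. y \<in> S \<Longrightarrow> \<alpha> \<in> en y \<Longrightarrow> \<alpha> \<notin> opt_acts y \<Longrightarrow> r y + qval y \<alpha> \<le> val y - \<eta>"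
proof
  define NO where "NO = {(y, \<alpha>). y \<in> S \<and> \<alpha> \<in> en y \<and> \<alpha> \<notin> opt_acts y}"
  have finite_NO: "finite NO"
    using finite_subset[of NO "S \<times> Act"] en_subset finite_S finite_Act unfolding NO_def by blast
  define \<eta> where "\<eta> = Min (insert 1 ((\<lambda>(y, \<alpha>). val y - r y - qval y \<alpha>) ` NO))"
  have "0 < val y - r y - qval y \<alpha>" if "(y, \<alpha>) \<in> NO" for y \<alpha>
    using that qval_le_val[of y \<alpha>] unfolding NO_def opt_acts_def by force
  then show "0 < \<eta>" unfolding \<eta>_def using finite_NO by (auto simp: Min_gr_iff)
  show "r y + qval y \<alpha> \<le> val y - \<eta>" if "y \<in> S" "\<alpha> \<in> en y" "\<alpha> \<notin> opt_acts y" for y \<alpha>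
  proof -
    have "(y, \<alpha>) \<in> NO" using that unfolding NO_def by simp
    then have "\<eta> \<le> val y - r y - qval y \<alpha>" unfolding \<eta>_def using finite_NO by (auto intro!: Min_le)
    then show ?thesis by simp
  qed
qed

text \<open>Outside the attractor the value is at most \<open>0\<close>: the states of maximal value there form a
  trap in the above sense.\<close>

lemma val_pos_in_attr:
  assumes x: "x \<in> S" and pos: "0 < val x"
  shows "x \<in> attr"
proof (rule ccontr)
  assume "x \<notin> attr"
  define W where "W = S - attr"
  have W: "finite W" "x \<in> W" using finite_S x \<open>x \<notin> attr\<close> unfolding W_def by auto
  define M where "M = Max (val ` W)"
  have val_le_M: "val y \<le> M" if "y \<in> W" for y unfolding M_def using W(1) that by simp
  define Z where "Z = {y\<in>W. val y = M}"
  have "M \<in> val ` W" unfolding M_def using W by (intro Max_in) auto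
  then obtain z where z: "z \<in> Z" unfolding Z_def by force
  have ZS: "Z \<subseteq> S" unfolding Z_def W_def by blast
  have rew_Z: "r y = 0" if "y \<in> Z" for y using that rew_outside_attr unfolding Z_def W_def by blast
  have closed: "u \<in> Z" if y: "y \<in> Z" and \<alpha>: "\<alpha> \<in> opt_acts y" and u: "0 < P y \<alpha> u" for y \<alpha> u
  proof -
    have yS: "y \<in> S" "y \<notin> attr" using y unfolding Z_def W_def by auto
    have succ_W: "w \<in> W" if "0 < P y \<alpha> w" for w
      using opt_successor_outside_attr[OF yS \<alpha> that] unfolding W_def by blast
    have "(\<Sum>w\<in>S. P y \<alpha> w * val w) = M"
      using \<alpha> rew_Z[OF y] y unfolding opt_acts_def qval_def Z_def by auto
    then have "val u = M"
      using successor_eq_if_avg_eq_max[OF yS(1) _ _ _ u] \<alpha> opt_acts_subset succ_W val_le_M by blast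
    then show ?thesis using succ_W[OF u] unfolding Z_def by blast
  qed
  obtain \<eta> where \<eta>: "0 < \<eta>" "\<And>y \<alpha>. y \<in> S \<Longrightarrow> \<alpha> \<in> en y \<Longrightarrow> \<alpha> \<notin> opt_acts y \<Longrightarrow> r y + qval y \<alpha> \<le> val y - \<eta>"
    using uniform_nonopt_gap by blast
  have "M \<le> 0"
  proof (rule trap_val_nonpos[OF ZS rew_Z _ closed _ \<eta>(1) z])
    show "\<And>y. y \<in> Z \<Longrightarrow> val y = M" unfolding Z_def by blast
    show "qval y \<alpha> \<le> M - \<eta>" if "y \<in> Z" "\<alpha> \<in> en y" "\<alpha> \<notin> opt_acts y" for y \<alpha>
      using \<eta>(2)[of y \<alpha>] that ZS rew_Z[OF that(1)] unfolding Z_def by auto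
  qed
  then show False using val_le_M[OF W(2)] pos by simp
qed

text \<open>On the top level of a set closed under \<open>opt_policy\<close> no reward is collected; a state there
  of positive value would lie in the attractor, from which \<open>opt_policy\<close> reaches a reward.\<close>

lemma closed_under_opt_policy_val_le:
  assumes Z_sub: "Z \<subseteq> S" and z: "z \<in> Z"
    and Z_closed: "\<And>w u. w \<in> Z \<Longrightarrow> 0 < P w (opt_policy w) u \<Longrightarrow> u \<in> Z"
  obtains w where "w \<in> Z" "val w \<le> total_rew r (memoryless opt_policy) w"
proof -
  have policy_en: "\<And>y. y \<in> S \<Longrightarrow> opt_policy y \<in> en y" by (rule opt_policy_en)
  have Z_fin: "finite Z" using finite_S Z_sub by (rule finite_subset[rotated])
  define R where "R = top_level Z"
  have R_sub: "R \<subseteq> Z" unfolding R_def by (rule top_level_subset)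
  have RS: "R \<subseteq> S" using R_sub Z_sub by (rule order_trans)
  have R_closed: "u \<in> R" if "w \<in> R" "0 < P w (opt_policy w) u" for w u
    unfolding R_def by (rule top_level_closed[OF Z_sub Z_fin policy_en Z_closed that[unfolded R_def]])
  have R_rew: "r w = 0" if "w \<in> R" for w
    by (rule top_level_rew_zero[OF transient Z_sub Z_fin policy_en Z_closed that[unfolded R_def]])
  obtain w where w: "w \<in> R" using top_level_nonempty[OF Z_fin z] unfolding R_def by blast
  have "total_rew r (memoryless opt_policy) w = 0"
    by (rule total_rew_memoryless_closed_rew_free[OF transient policy_en RS R_rew R_closed w])
  moreover have "val w \<le> 0"
  proof (rule ccontr)
    assume "\<not> val w \<le> 0"
    then have "w \<in> attr" by (intro val_pos_in_attr[OF subsetD[OF RS w]]) simp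
    have "\<exists>w'\<in>R. r w' \<noteq> 0" by (rule opt_policy_leaves_closed_set[OF RS R_closed w \<open>w \<in> attr\<close>])
    then show False using R_rew by blast
  qed
  ultimately show thesis using that subsetD[OF R_sub w] by simp
qed

lemma total_rew_opt_policy:
  assumes x: "x \<in> S"
  shows "total_rew r (memoryless opt_policy) x = val x"
proof -
  let ?\<sigma> = "memoryless opt_policy"
  define \<delta> where "\<delta> y = val y - total_rew r ?\<sigma> y" for y
  have policy_en: "\<And>y. y \<in> S \<Longrightarrow> opt_policy y \<in> en y" by (rule opt_policy_en)
  have \<delta>_nonneg: "0 \<le> \<delta> y" if "y \<in> S" for y
    unfolding \<delta>_def using total_rew_le_val[OF memoryless_in_Scheds[OF policy_en] that] by simp
  have \<delta>_step: "\<delta> y = (\<Sum>u\<in>S. P y (opt_policy y) u * \<delta> u)" if y: "y \<in> S" for y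
  proof -
    have "val y = r y + qval y (opt_policy y)" using opt_policy_opt[OF y] unfolding opt_acts_def by simp
    moreover note total_rew_memoryless_step[OF transient policy_en y]
    ultimately show ?thesis unfolding \<delta>_def qval_def by (simp add: right_diff_distrib sum_subtractf)
  qed
  define M where "M = Max (\<delta> ` S)"
  have \<delta>_le_M: "\<delta> y \<le> M" if "y \<in> S" for y unfolding M_def using finite_S that by simp
  define Z where "Z = {y\<in>S. \<delta> y = M}"
  have "M \<in> \<delta> ` S" unfolding M_def using finite_S S_nonempty by (intro Max_in) auto
  then obtain z where z: "z \<in> Z" unfolding Z_def by force
  have Z_closed: "u \<in> Z" if y: "y \<in> Z" and u: "0 < P y (opt_policy y) u" for y u
  proof -
    have yS: "y \<in> S" using y unfolding Z_def by simp
    have "(\<Sum>w\<in>S. P y (opt_policy y) w * \<delta> w) = M" using \<delta>_step[OF yS] y unfolding Z_def by simp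
    then have "\<delta> u = M" by (rule successor_eq_if_avg_eq_max[OF yS policy_en[OF yS] _ _ u]) (rule \<delta>_le_M)
    moreover have "u \<in> S" using P_pos_in_S[OF yS _ u] policy_en[OF yS] en_subset by blast
    ultimately show ?thesis unfolding Z_def by simp
  qed
  obtain w where "w \<in> Z" "val w \<le> total_rew r ?\<sigma> w"
    using closed_under_opt_policy_val_le[of Z z] Z_closed z unfolding Z_def by blast
  then have "M \<le> 0" unfolding Z_def \<delta>_def by simp
  then show ?thesis using \<delta>_le_M[OF x] \<delta>_nonneg[OF x] unfolding \<delta>_def by simp
qed

lemma total_rew_max_attained:
  assumes "x \<in> S"
  shows "\<exists>\<sigma>\<in>Scheds. \<forall>\<sigma>'\<in>Scheds. total_rew r \<sigma>' x \<le> total_rew r \<sigma> x"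
proof
  show "memoryless opt_policy \<in> Scheds" by (rule memoryless_in_Scheds[OF opt_policy_en])
  show "\<forall>\<sigma>'\<in>Scheds. total_rew r \<sigma>' x \<le> total_rew r (memoryless opt_policy) x"
    using total_rew_le_val[OF _ assms] total_rew_opt_policy[OF assms] by simp
qed

end

section \<open>Goal unfolding\<close>

text \<open>A path of \<open>\<M>\<close> from \<open>s\<close>, lifted to the goal unfolding: each state is annotated with the
  targets visited strictly before it, starting from \<open>U\<close>.\<close>

fun lift_path :: "'s set set \<Rightarrow> 's set set \<Rightarrow> 's \<Rightarrow> ('a \<times> 's) list \<Rightarrow> ('a \<times> ('s \<times> 's set set)) list" where
  "lift_path TT U s [] = []"
| "lift_path TT U s ((\<alpha>, t) # h) =
     (\<alpha>, (t, U \<union> {V\<in>TT. s \<in> V})) # lift_path TT (U \<union> {V\<in>TT. s \<in> V}) t h"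

definition proj_path :: "('a \<times> ('s \<times> 's set set)) list \<Rightarrow> ('a \<times> 's) list" where
  "proj_path h = map (\<lambda>(\<alpha>, y). (\<alpha>, fst y)) h"

lemma proj_path_Cons [simp]: "proj_path ((\<alpha>, y) # h) = (\<alpha>, fst y) # proj_path h"
  by (simp add: proj_path_def)

lemma proj_lift_path: "proj_path (lift_path TT U s h) = h"
  by (induction TT U s h rule: lift_path.induct) (auto simp: proj_path_def)

lemma set_lift_path: "U \<subseteq> TT \<Longrightarrow> set h \<subseteq> Act \<times> S \<Longrightarrow> set (lift_path TT U s h) \<subseteq> Act \<times> (S \<times> Pow TT)"
  by (induction TT U s h rule: lift_path.induct) auto

lemma last_state_lift_path: "fst (last_state (s, U) (lift_path TT U s h)) = last_state s h"
  by (induction TT U s h rule: lift_path.induct) auto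

lemma last_state_proj_path: "fst (last_state x h) = last_state (fst x) (proj_path h)"
proof (induction h arbitrary: x)
  case (Cons a h)
  then show ?case by (cases a) simp
qed (simp add: proj_path_def)

definition unf_rew :: "'s set set \<Rightarrow> ('s set \<Rightarrow> real) \<Rightarrow> ('s \<times> 's set set) \<Rightarrow> real" where
  "unf_rew TT w x = (\<Sum>V\<in>TT. w V * rewT V x)"

lemma image_eq_atLeastAtMost_if_mixing:
  fixes f :: "'b \<Rightarrow> real"
  assumes "a \<in> A" "b \<in> A" "\<And>z. z \<in> A \<Longrightarrow> f a \<le> f z \<and> f z \<le> f b"
    and "\<And>l. 0 \<le> l \<Longrightarrow> l \<le> 1 \<Longrightarrow> \<exists>z\<in>A. f z = l * f b + (1 - l) * f a"
  shows "f ` A = {f a..f b}"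
proof
  show "f ` A \<subseteq> {f a..f b}" using assms(3) by auto
  show "{f a..f b} \<subseteq> f ` A"
  proof
    fix v assume v: "v \<in> {f a..f b}"
    show "v \<in> f ` A"
    proof (cases "f a = f b")
      case True
      then have "v = f a" using v by simp
      then show ?thesis using assms(1) by blast
    next
      case False
      then have ab: "f a < f b" using v by simp
      define l where "l = (v - f a) / (f b - f a)"
      have "0 \<le> l" "l \<le> 1" using v ab unfolding l_def by auto
      then obtain z where "z \<in> A" "f z = l * f b + (1 - l) * f a" using assms(4) by blast
      moreover have "l * f b + (1 - l) * f a = v"
      proof -
        have "l * (f b - f a) = v - f a" using ab unfolding l_def by simp
        then show ?thesis by (simp add: algebra_simps)
      qed
      ultimately show ?thesis by force
    qed
  qed
qed

locale goal_unfolding = mdp S Act P for S :: "'s set" and Act :: "'a set" and P +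
  fixes TT :: "'s set set"
  assumes finite_TT: "finite TT"
begin

abbreviation "Sc \<equiv> S \<times> Pow TT"
abbreviation "Pc \<equiv> unf_P P TT"

lemma sum_unf_P:
  assumes "U \<subseteq> TT"
  shows "(\<Sum>y\<in>Sc. Pc (s, U) \<alpha> y * g y) = (\<Sum>t\<in>S. P s \<alpha> t * g (t, U \<union> {V\<in>TT. s \<in> V}))"
proof -
  have U': "U \<union> {V\<in>TT. s \<in> V} \<in> Pow TT" using assms by auto
  have "(\<Sum>y\<in>Sc. Pc (s, U) \<alpha> y * g y) = (\<Sum>t\<in>S. \<Sum>W\<in>Pow TT. Pc (s, U) \<alpha> (t, W) * g (t, W))"
    by (rule sum.cartesian_product')
  also have "\<dots> = (\<Sum>t\<in>S. \<Sum>W\<in>Pow TT.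
                     if W = U \<union> {V\<in>TT. s \<in> V} then P s \<alpha> t * g (t, U \<union> {V\<in>TT. s \<in> V}) else 0)"
    by (intro sum.cong refl) (auto simp: unf_P_def)
  also have "\<dots> = (\<Sum>t\<in>S. P s \<alpha> t * g (t, U \<union> {V\<in>TT. s \<in> V}))"
    using U' finite_TT by simp
  finally show ?thesis .
qed

lemma sum_unf_P_1: "U \<subseteq> TT \<Longrightarrow> (\<Sum>y\<in>Sc. Pc (s, U) \<alpha> y) = (\<Sum>t\<in>S. P s \<alpha> t)"
  using sum_unf_P[of U s \<alpha> "\<lambda>_. 1"] by simp

lemma is_mdp_unf: "is_mdp Sc Act Pc"
proof -
  have "Sc \<noteq> {}" using S_nonempty by blast
  moreover have "0 \<le> Pc x \<alpha> y \<and> (y \<notin> Sc \<longrightarrow> Pc x \<alpha> y = 0)" if "x \<in> Sc" "\<alpha> \<in> Act" for x \<alpha> y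
  proof
    show "0 \<le> Pc x \<alpha> y" using P_nonneg[of "fst x" \<alpha>] that by (auto simp: unf_P_def)
    show "y \<notin> Sc \<longrightarrow> Pc x \<alpha> y = 0"
    proof
      assume y: "y \<notin> Sc"
      show "Pc x \<alpha> y = 0"
      proof (cases "snd y = snd x \<union> {T\<in>TT. fst x \<in> T}")
        case True
        then have "fst y \<notin> S" using y that(1) by (cases y) auto
        then show ?thesis using True P_outside[of "fst x" \<alpha> "fst y"] that by (auto simp: unf_P_def)
      qed (simp add: unf_P_def)
    qed
  qed
  moreover have "(\<Sum>y\<in>Sc. Pc x \<alpha> y) = (\<Sum>t\<in>S. P (fst x) \<alpha> t)" if "x \<in> Sc" for x \<alpha>
    using sum_unf_P_1[of "snd x" "fst x" \<alpha>] that by (cases x) auto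
  ultimately show ?thesis
    using mdp finite_S finite_TT unfolding is_mdp_def by (auto simp: mem_Times_iff)
qed

lemma enabled_unf: "x \<in> Sc \<Longrightarrow> enabled Sc Act Pc x = en (fst x)"
  unfolding enabled_def using sum_unf_P_1[of "snd x" "fst x"] by (cases x) auto

text \<open>The set of visited targets only grows, so its size is a level function.\<close>

sublocale unf: leveled_mdp Sc Act Pc "\<lambda>x. card (snd x)"
proof (unfold_locales)
  show "is_mdp Sc Act Pc" by (rule is_mdp_unf)
  fix x \<alpha> y assume x: "x \<in> Sc" and "\<alpha> \<in> Act" and p: "0 < Pc x \<alpha> y"
  then have "snd y = snd x \<union> {T\<in>TT. fst x \<in> T}" by (auto simp: unf_P_def split: if_splits)
  moreover have "finite (snd x \<union> {T\<in>TT. fst x \<in> T})" using x finite_TT finite_subset by auto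
  ultimately show "card (snd x) \<le> card (snd y)" by (simp add: card_mono)
qed

lemma transient_unf_rew: "unf.transient_rew (unf_rew TT w)"
  unfolding unf.transient_rew_def
proof (intro ballI impI allI)
  fix x \<alpha> y assume x: "x \<in> Sc" and r: "unf_rew TT w x \<noteq> 0" and "\<alpha> \<in> Act" and p: "0 < Pc x \<alpha> y"
  obtain V where V: "V \<in> TT" "w V * rewT V x \<noteq> 0" using r unfolding unf_rew_def by (meson sum.neutral)
  then have "fst x \<in> V" "V \<notin> snd x" by (auto simp: rewT_def split: if_splits)
  moreover have sy: "snd y = snd x \<union> {T\<in>TT. fst x \<in> T}" using p by (auto simp: unf_P_def split: if_splits)
  ultimately have "snd x \<subset> snd y" using V(1) by auto
  moreover have "finite (snd y)" using sy x finite_TT finite_subset by auto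
  ultimately show "card (snd x) < card (snd y)" by (rule psubset_card_mono[rotated])
qed

sublocale unf_opt: transient_rew_mdp Sc Act Pc "\<lambda>x. card (snd x)" "unf_rew TT w" for w
  by unfold_locales (rule transient_unf_rew)

definition sched_corresp :: "('s \<times> 's set set, 'a) sched \<Rightarrow> ('s, 'a) sched \<Rightarrow> 's \<Rightarrow> 's set set \<Rightarrow> bool" where
  "sched_corresp \<sigma>' \<sigma> s U \<longleftrightarrow> (\<forall>h. set h \<subseteq> Act \<times> S \<longrightarrow> \<sigma>' (s, U) (lift_path TT U s h) = \<sigma> s h)"

lemma sched_corresp_shift:
  assumes "sched_corresp \<sigma>' \<sigma> s U" "\<alpha> \<in> Act" "t \<in> S"
  shows "sched_corresp (sched_shift \<sigma>' (s, U) \<alpha> (t, U \<union> {V\<in>TT. s \<in> V})) (sched_shift \<sigma> s \<alpha> t) t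
           (U \<union> {V\<in>TT. s \<in> V})"
  unfolding sched_corresp_def
proof (intro allI impI)
  fix h :: "('a \<times> 's) list" assume "set h \<subseteq> Act \<times> S"
  then have "set ((\<alpha>, t) # h) \<subseteq> Act \<times> S" using assms by auto
  then have "\<sigma>' (s, U) (lift_path TT U s ((\<alpha>, t) # h)) = \<sigma> s ((\<alpha>, t) # h)"
    using assms(1) unfolding sched_corresp_def by blast
  then show "sched_shift \<sigma>' (s, U) \<alpha> (t, U \<union> {V\<in>TT. s \<in> V}) (t, U \<union> {V\<in>TT. s \<in> V})
               (lift_path TT (U \<union> {V\<in>TT. s \<in> V}) t h) = sched_shift \<sigma> s \<alpha> t t h"
    by (simp add: sched_shift_def)
qed

lemma rewT_step:
  assumes "\<sigma> \<in> Scheds" "s \<in> S" "V \<in> TT"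
  shows "rewT V (s, U) + (\<Sum>\<alpha>\<in>Act. \<Sum>t\<in>S. \<sigma> s [] \<alpha> * P s \<alpha> t *
           (if V \<in> U \<union> {V\<in>TT. s \<in> V} then 0 else reach_upto n (sched_shift \<sigma> s \<alpha> t) t V))
         = (if V \<in> U then 0 else reach_upto (Suc n) \<sigma> s V)"
  using assms reach_upto_Suc[OF assms(1,2), of n V] by (auto simp: rewT_def)

lemma total_rew_upto_unf_eq_reach_upto:
  assumes "\<sigma>' \<in> unf.Scheds" "\<sigma> \<in> Scheds" "s \<in> S" "U \<subseteq> TT" "sched_corresp \<sigma>' \<sigma> s U"
  shows "unf.total_rew_upto (unf_rew TT w) n \<sigma>' (s, U) = (\<Sum>V\<in>TT. w V * (if V \<in> U then 0 else reach_upto n \<sigma> s V))"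
  using assms
proof (induction n arbitrary: \<sigma>' \<sigma> s U)
  case 0
  show ?case unfolding unf.total_rew_upto_0 unf_rew_def reach_upto_0
    by (intro sum.cong refl) (auto simp: rewT_def)
next
  case (Suc n)
  define U' where "U' = U \<union> {V\<in>TT. s \<in> V}"
  have U': "U' \<subseteq> TT" using Suc.prems(4) unfolding U'_def by auto
  have sU: "(s, U) \<in> Sc" using Suc.prems by auto
  have first: "\<sigma>' (s, U) [] = \<sigma> s []"
    using Suc.prems(5) lift_path.simps(1) unfolding sched_corresp_def by (metis empty_subsetI list.set(1))
  have IH: "unf.total_rew_upto (unf_rew TT w) n (sched_shift \<sigma>' (s, U) \<alpha> (t, U')) (t, U') =
            (\<Sum>V\<in>TT. w V * (if V \<in> U' then 0 else reach_upto n (sched_shift \<sigma> s \<alpha> t) t V))"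
    if "\<alpha> \<in> Act" "t \<in> S" for \<alpha> t
    using Suc.IH[OF _ sched_shift_in_Scheds[OF Suc.prems(2,3) that] that(2) U']
      unf.sched_shift_in_Scheds[OF Suc.prems(1) sU that(1)] that(2) U'
      sched_corresp_shift[OF Suc.prems(5) that] unfolding U'_def by auto
  have "unf.total_rew_upto (unf_rew TT w) (Suc n) \<sigma>' (s, U) = unf_rew TT w (s, U) +
      (\<Sum>\<alpha>\<in>Act. \<Sum>t\<in>S. \<sigma> s [] \<alpha> * P s \<alpha> t * unf.total_rew_upto (unf_rew TT w) n (sched_shift \<sigma>' (s, U) \<alpha> (t, U')) (t, U'))"
  proof -
    have "(\<Sum>y\<in>Sc. \<sigma>' (s, U) [] \<alpha> * Pc (s, U) \<alpha> y * unf.total_rew_upto (unf_rew TT w) n (sched_shift \<sigma>' (s, U) \<alpha> y) y) =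
          (\<Sum>t\<in>S. \<sigma> s [] \<alpha> * P s \<alpha> t * unf.total_rew_upto (unf_rew TT w) n (sched_shift \<sigma>' (s, U) \<alpha> (t, U')) (t, U'))" for \<alpha>
      using sum_unf_P[OF Suc.prems(4), of s \<alpha> "\<lambda>y. \<sigma>' (s, U) [] \<alpha> * unf.total_rew_upto (unf_rew TT w) n (sched_shift \<sigma>' (s, U) \<alpha> y) y"]
      unfolding first U'_def by (simp add: ac_simps)
    then show ?thesis unfolding unf.total_rew_upto_Suc[OF Suc.prems(1) sU] by simp
  qed
  also have "\<dots> = unf_rew TT w (s, U) + (\<Sum>\<alpha>\<in>Act. \<Sum>t\<in>S. \<sigma> s [] \<alpha> * P s \<alpha> t *
                     (\<Sum>V\<in>TT. w V * (if V \<in> U' then 0 else reach_upto n (sched_shift \<sigma> s \<alpha> t) t V)))"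
    using IH by simp
  also have "\<dots> = (\<Sum>V\<in>TT. w V * (rewT V (s, U) + (\<Sum>\<alpha>\<in>Act. \<Sum>t\<in>S. \<sigma> s [] \<alpha> * P s \<alpha> t *
                     (if V \<in> U' then 0 else reach_upto n (sched_shift \<sigma> s \<alpha> t) t V))))"
    unfolding unf_rew_def
    by (simp add: distrib_left sum.distrib sum_distrib_left mult.commute mult.left_commute sum.swap[of _ TT])
  also have "\<dots> = (\<Sum>V\<in>TT. w V * (if V \<in> U then 0 else reach_upto (Suc n) \<sigma> s V))"
    using rewT_step[OF Suc.prems(2,3)] unfolding U'_def by simp
  finally show ?case .
qed

definition weighted_reach :: "('s set \<Rightarrow> real) \<Rightarrow> ('s, 'a) sched \<Rightarrow> 's \<Rightarrow> real" where
  "weighted_reach w \<sigma> s = (\<Sum>V\<in>TT. w V * reach_prob S Act P \<sigma> s V)"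

lemma total_rew_unf_eq_weighted_reach:
  assumes "\<sigma>' \<in> unf.Scheds" "\<sigma> \<in> Scheds" "s \<in> S" "sched_corresp \<sigma>' \<sigma> s {}"
  shows "unf.total_rew (unf_rew TT w) \<sigma>' (s, {}) = weighted_reach w \<sigma> s"
proof -
  have "(\<lambda>n. unf.total_rew_upto (unf_rew TT w) n \<sigma>' (s, {})) = (\<lambda>n. \<Sum>V\<in>TT. w V * reach_upto n \<sigma> s V)"
    using total_rew_upto_unf_eq_reach_upto[OF assms(1-3) _ assms(4)] by simp
  moreover have "(\<lambda>n. \<Sum>V\<in>TT. w V * reach_upto n \<sigma> s V) \<longlonglongrightarrow> weighted_reach w \<sigma> s"
    unfolding weighted_reach_def by (intro tendsto_intros reach_upto_tendsto assms)
  ultimately show ?thesis unfolding unf.total_rew_eq_lim by (simp add: limI)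
qed

definition to_unf_sched :: "('s, 'a) sched \<Rightarrow> ('s \<times> 's set set, 'a) sched" where
  "to_unf_sched \<sigma> = (\<lambda>x h. \<sigma> (fst x) (proj_path h))"

definition from_unf_sched :: "('s \<times> 's set set, 'a) sched \<Rightarrow> ('s, 'a) sched" where
  "from_unf_sched \<sigma>' = (\<lambda>s h. \<sigma>' (s, {}) (lift_path TT {} s h))"

lemma to_unf_sched_in_Scheds:
  assumes "\<sigma> \<in> Scheds"
  shows "to_unf_sched \<sigma> \<in> unf.Scheds"
  unfolding scheds_def is_sched_def mem_Collect_eq
proof (intro allI impI)
  fix x h assume "x \<in> Sc \<and> set h \<subseteq> Act \<times> Sc"
  then have x: "x \<in> Sc" "fst x \<in> S" and h: "set h \<subseteq> Act \<times> Sc" "set (proj_path h) \<subseteq> Act \<times> S"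
    by (auto simp: proj_path_def)
  have "enabled Sc Act Pc (last_state x h) = en (last_state (fst x) (proj_path h))"
    using enabled_unf[OF unf.last_state_in_S[OF x(1) h(1)]] last_state_proj_path by metis
  then show "(\<forall>\<beta>. 0 \<le> to_unf_sched \<sigma> x h \<beta>) \<and>
      (\<forall>\<beta>. \<beta> \<notin> enabled Sc Act Pc (last_state x h) \<longrightarrow> to_unf_sched \<sigma> x h \<beta> = 0) \<and>
      (\<Sum>\<beta>\<in>enabled Sc Act Pc (last_state x h). to_unf_sched \<sigma> x h \<beta>) = 1"
    unfolding to_unf_sched_def
    using sched_nonneg[OF assms x(2) h(2)] sched_disabled[OF assms x(2) h(2)] sched_sum_en[OF assms x(2) h(2)]
    by auto
qed

lemma sched_corresp_to_unf: "sched_corresp (to_unf_sched \<sigma>) \<sigma> s U"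
  unfolding sched_corresp_def to_unf_sched_def by (simp add: proj_lift_path)

lemma from_unf_sched_in_Scheds:
  assumes "\<sigma>' \<in> unf.Scheds"
  shows "from_unf_sched \<sigma>' \<in> Scheds"
  unfolding scheds_def is_sched_def mem_Collect_eq
proof (intro allI impI)
  fix s h assume "s \<in> S \<and> set h \<subseteq> Act \<times> S"
  then have s: "(s, {}) \<in> Sc" and h: "set (lift_path TT {} s h) \<subseteq> Act \<times> Sc"
    using set_lift_path[of "{}" TT h Act S s] by auto
  have "enabled Sc Act Pc (last_state (s, {}) (lift_path TT {} s h)) = en (last_state s h)"
    using enabled_unf[OF unf.last_state_in_S[OF s h]] last_state_lift_path by metis
  then show "(\<forall>\<beta>. 0 \<le> from_unf_sched \<sigma>' s h \<beta>) \<and>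
      (\<forall>\<beta>. \<beta> \<notin> en (last_state s h) \<longrightarrow> from_unf_sched \<sigma>' s h \<beta> = 0) \<and>
      (\<Sum>\<beta>\<in>en (last_state s h). from_unf_sched \<sigma>' s h \<beta>) = 1"
    unfolding from_unf_sched_def
    using unf.sched_nonneg[OF assms s h] unf.sched_disabled[OF assms s h] unf.sched_sum_en[OF assms s h]
    by auto
qed

lemma sched_corresp_from_unf: "sched_corresp \<sigma>' (from_unf_sched \<sigma>') s {}"
  unfolding sched_corresp_def from_unf_sched_def by simp

lemma total_rew_unf_image:
  assumes "s \<in> S"
  shows "(\<lambda>\<sigma>'. unf.total_rew (unf_rew TT w) \<sigma>' (s, {})) ` unf.Scheds = (\<lambda>\<sigma>. weighted_reach w \<sigma> s) ` Scheds"
proof (intro equalityI image_subsetI)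
  fix \<sigma>' assume "\<sigma>' \<in> unf.Scheds"
  then show "unf.total_rew (unf_rew TT w) \<sigma>' (s, {}) \<in> (\<lambda>\<sigma>. weighted_reach w \<sigma> s) ` Scheds"
    using total_rew_unf_eq_weighted_reach[OF _ from_unf_sched_in_Scheds assms sched_corresp_from_unf]
      from_unf_sched_in_Scheds by blast
next
  fix \<sigma> assume "\<sigma> \<in> Scheds"
  then show "weighted_reach w \<sigma> s \<in> (\<lambda>\<sigma>'. unf.total_rew (unf_rew TT w) \<sigma>' (s, {})) ` unf.Scheds"
    using total_rew_unf_eq_weighted_reach[OF to_unf_sched_in_Scheds _ assms sched_corresp_to_unf]
      to_unf_sched_in_Scheds by (metis image_eqI)
qed

lemma weighted_reach_max_attained:
  assumes "s \<in> S"
  obtains \<sigma> where "\<sigma> \<in> Scheds" "\<And>\<sigma>''. \<sigma>'' \<in> Scheds \<Longrightarrow> weighted_reach w \<sigma>'' s \<le> weighted_reach w \<sigma> s"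
proof -
  have s: "(s, {}) \<in> Sc" using assms by simp
  obtain \<sigma>' where \<sigma>': "\<sigma>' \<in> unf.Scheds"
    "\<forall>\<sigma>''\<in>unf.Scheds. unf.total_rew (unf_rew TT w) \<sigma>'' (s, {}) \<le> unf.total_rew (unf_rew TT w) \<sigma>' (s, {})"
    using unf_opt.total_rew_max_attained[OF s] by blast
  show thesis
  proof (rule that[OF from_unf_sched_in_Scheds[OF \<sigma>'(1)]])
    fix \<sigma>'' assume \<sigma>'': "\<sigma>'' \<in> Scheds"
    have "weighted_reach w \<sigma>'' s = unf.total_rew (unf_rew TT w) (to_unf_sched \<sigma>'') (s, {})"
      using total_rew_unf_eq_weighted_reach[OF to_unf_sched_in_Scheds[OF \<sigma>''] \<sigma>'' assms sched_corresp_to_unf] ..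
    also have "\<dots> \<le> unf.total_rew (unf_rew TT w) \<sigma>' (s, {})" using \<sigma>'(2) to_unf_sched_in_Scheds[OF \<sigma>''] by blast
    also have "\<dots> = weighted_reach w (from_unf_sched \<sigma>') s"
      by (rule total_rew_unf_eq_weighted_reach[OF \<sigma>'(1) from_unf_sched_in_Scheds[OF \<sigma>'(1)] assms sched_corresp_from_unf])
    finally show "weighted_reach w \<sigma>'' s \<le> weighted_reach w (from_unf_sched \<sigma>') s" .
  qed
qed

lemma weighted_reach_min_attained:
  assumes "s \<in> S"
  obtains \<sigma> where "\<sigma> \<in> Scheds" "\<And>\<sigma>''. \<sigma>'' \<in> Scheds \<Longrightarrow> weighted_reach w \<sigma> s \<le> weighted_reach w \<sigma>'' s"
proof -
  have neg: "weighted_reach (\<lambda>V. - w V) \<sigma> s = - weighted_reach w \<sigma> s" for \<sigma>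
    by (simp add: weighted_reach_def sum_negf)
  show thesis using weighted_reach_max_attained[OF assms, of "\<lambda>V. - w V"] that unfolding neg by auto
qed

lemma weighted_reach_mix_sched:
  assumes "0 \<le> l" "l \<le> 1" "\<sigma>1 \<in> Scheds" "\<sigma>2 \<in> Scheds" "s \<in> S"
  shows "weighted_reach w (mix_sched l P \<sigma>1 \<sigma>2) s = l * weighted_reach w \<sigma>1 s + (1 - l) * weighted_reach w \<sigma>2 s"
proof -
  have "w V * (l * reach_prob S Act P \<sigma>1 s V + (1 - l) * reach_prob S Act P \<sigma>2 s V) =
        l * (w V * reach_prob S Act P \<sigma>1 s V) + (1 - l) * (w V * reach_prob S Act P \<sigma>2 s V)" for V
    by (simp add: algebra_simps)
  then show ?thesis unfolding weighted_reach_def reach_prob_mix_sched[OF assms]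
    by (simp only: sum.distrib sum_distrib_left[symmetric])
qed

lemma weighted_reach_image:
  assumes "s \<in> S"
  obtains a b where "a \<le> b" "(\<lambda>\<sigma>. weighted_reach w \<sigma> s) ` Scheds = {a..b}"
proof -
  obtain \<sigma>M where \<sigma>M: "\<sigma>M \<in> Scheds" "\<And>\<sigma>. \<sigma> \<in> Scheds \<Longrightarrow> weighted_reach w \<sigma> s \<le> weighted_reach w \<sigma>M s"
    using weighted_reach_max_attained[OF assms] by blast
  obtain \<sigma>m where \<sigma>m: "\<sigma>m \<in> Scheds" "\<And>\<sigma>. \<sigma> \<in> Scheds \<Longrightarrow> weighted_reach w \<sigma>m s \<le> weighted_reach w \<sigma> s"
    using weighted_reach_min_attained[OF assms] by blast
  have "(\<lambda>\<sigma>. weighted_reach w \<sigma> s) ` Scheds = {weighted_reach w \<sigma>m s..weighted_reach w \<sigma>M s}"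
  proof (rule image_eq_atLeastAtMost_if_mixing[OF \<sigma>m(1) \<sigma>M(1)])
    show "weighted_reach w \<sigma>m s \<le> weighted_reach w \<sigma> s \<and> weighted_reach w \<sigma> s \<le> weighted_reach w \<sigma>M s"
      if "\<sigma> \<in> Scheds" for \<sigma>
      using \<sigma>m(2)[OF that] \<sigma>M(2)[OF that] by simp
    show "\<exists>\<sigma>\<in>Scheds. weighted_reach w \<sigma> s = l * weighted_reach w \<sigma>M s + (1 - l) * weighted_reach w \<sigma>m s"
      if "0 \<le> l" "l \<le> 1" for l
      using weighted_reach_mix_sched[OF that \<sigma>M(1) \<sigma>m(1) assms] mix_sched_in_Scheds[OF that \<sigma>M(1) \<sigma>m(1)] by blast
  qed
  then show thesis using that \<sigma>m(2)[OF \<sigma>M(1)] by blast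
qed

end

section \<open>Summing over the combinations\<close>

lemma sum_choice_in_intervals:
  fixes a b :: "'c \<Rightarrow> real"
  assumes "finite C" "\<And>c. c \<in> C \<Longrightarrow> a c \<le> b c" "sum a C \<le> t" "t \<le> sum b C"
  obtains f where "\<And>c. c \<in> C \<Longrightarrow> a c \<le> f c \<and> f c \<le> b c" "sum f C = t"
proof -
  define \<theta> where "\<theta> = (if sum b C = sum a C then 0 else (t - sum a C) / (sum b C - sum a C))"
  have ab: "sum a C \<le> sum b C" using assms(2) by (rule sum_mono)
  have \<theta>: "0 \<le> \<theta>" "\<theta> \<le> 1" "t = sum a C + \<theta> * (sum b C - sum a C)"
    using assms(3,4) ab unfolding \<theta>_def by auto
  show thesis
  proof (rule that[of "\<lambda>c. a c + \<theta> * (b c - a c)"])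
    fix c assume "c \<in> C"
    then have "0 \<le> b c - a c" using assms(2) by simp
    then have "\<theta> * (b c - a c) \<le> b c - a c" "0 \<le> \<theta> * (b c - a c)"
      using \<theta>(1,2) by (simp_all add: mult_left_le_one_le)
    then show "a c \<le> a c + \<theta> * (b c - a c) \<and> a c + \<theta> * (b c - a c) \<le> b c" by simp
  next
    show "(\<Sum>c\<in>C. a c + \<theta> * (b c - a c)) = t"
      unfolding \<theta>(3) by (simp add: sum.distrib sum_distrib_left[symmetric] sum_subtractf)
  qed
qed

context mdp
begin

text \<open>The contribution of the combination \<open>c\<close> to \<open>(\<star>)\<close>; it only depends on how the scheduler
  behaves on paths from \<open>fst c\<close>, so different combinations can use independent schedulers.\<close>

definition comb_value :: "nat \<Rightarrow> (nat \<Rightarrow> real) \<Rightarrow> (nat \<Rightarrow> 's) \<Rightarrow> (nat \<Rightarrow> 's set) \<Rightarrow> (nat \<Rightarrow> nat)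
                          \<Rightarrow> 's \<times> nat \<Rightarrow> ('s, 'a) sched \<Rightarrow> real" where
  "comb_value m q s T k c \<sigma> = (\<Sum>i\<in>ind m s k c. q i * reach_prob S Act P \<sigma> (fst c) (T i))"

lemma comb_value_cong_sched:
  "(\<And>h. \<sigma>1 (fst c) h = \<sigma>2 (fst c) h) \<Longrightarrow> comb_value m q s T k c \<sigma>1 = comb_value m q s T k c \<sigma>2"
  unfolding comb_value_def using reach_prob_cong_sched by metis

lemma sum_reach_prob_eq_sum_comb_value:
  "(\<Sum>i=1..m. q i * reach_prob S Act P (\<sigma> (k i)) (s i) (T i)) =
   (\<Sum>c\<in>Comb m s k. comb_value m q s T k c (\<sigma> (snd c)))"
proof -
  have "(\<Sum>i=1..m. q i * reach_prob S Act P (\<sigma> (k i)) (s i) (T i)) =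
        (\<Sum>c\<in>(\<lambda>i. (s i, k i)) ` {1..m}. \<Sum>i\<in>{i\<in>{1..m}. (s i, k i) = c}. q i * reach_prob S Act P (\<sigma> (k i)) (s i) (T i))"
    by (rule sum.image_gen) simp
  also have "\<dots> = (\<Sum>c\<in>Comb m s k. comb_value m q s T k c (\<sigma> (snd c)))"
    unfolding Comb_def comb_value_def ind_def by (intro sum.cong refl) auto
  finally show ?thesis .
qed

lemma comb_value_image:
  assumes c: "c \<in> Comb m s k" and s: "\<forall>i\<in>{1..m}. s i \<in> S"
  shows "(\<lambda>\<sigma>. comb_value m q s T k c \<sigma>) ` Scheds = {vmin_c S Act P m q s T k c..vmax_c S Act P m q s T k c}"
proof -
  define TT where "TT = Tc m s T k c"
  define w where "w = qT m q s T k c"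
  have finite_ind: "finite (ind m s k c)" unfolding ind_def by simp
  interpret U: goal_unfolding S Act P TT by unfold_locales (simp add: TT_def Tc_def finite_ind)
  have c_in_S: "fst c \<in> S" using c s unfolding Comb_def by auto
  have value_eq: "comb_value m q s T k c \<sigma> = U.weighted_reach w \<sigma> (fst c)" for \<sigma>
  proof -
    have "comb_value m q s T k c \<sigma> =
          (\<Sum>V\<in>T ` ind m s k c. \<Sum>i\<in>{i\<in>ind m s k c. T i = V}. q i * reach_prob S Act P \<sigma> (fst c) (T i))"
      unfolding comb_value_def by (rule sum.image_gen[OF finite_ind])
    also have "\<dots> = (\<Sum>V\<in>T ` ind m s k c. (\<Sum>i\<in>{i\<in>ind m s k c. T i = V}. q i) * reach_prob S Act P \<sigma> (fst c) V)"
      by (intro sum.cong refl) (auto simp: sum_distrib_right)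
    finally show ?thesis unfolding U.weighted_reach_def by (simp add: w_def TT_def Tc_def qT_def)
  qed
  obtain a b where ab: "a \<le> b" "(\<lambda>\<sigma>. U.weighted_reach w \<sigma> (fst c)) ` Scheds = {a..b}"
    using U.weighted_reach_image[OF c_in_S] by blast
  have unf_image: "(\<lambda>\<sigma>'. exp_total_rew (unf_states S TT) Act (unf_P P TT) \<sigma>' (fst c, {}) (rew_c m q s T k c)) `
      scheds (unf_states S TT) Act (unf_P P TT) = {a..b}"
  proof -
    have "rew_c m q s T k c = unf_rew TT w" by (simp add: fun_eq_iff rew_c_def unf_rew_def TT_def w_def)
    then show ?thesis unfolding unf_states_def using U.total_rew_unf_image[OF c_in_S, of w] ab(2) by simp
  qed
  have "vmax_c S Act P m q s T k c = b" "vmin_c S Act P m q s T k c = a"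
    unfolding vmax_c_def vmin_c_def Let_def TT_def[symmetric] unf_image using ab(1) by simp_all
  then show ?thesis using ab(2) unfolding value_eq by simp
qed

lemma sched_family_from_comb:
  assumes "\<And>c. c \<in> C \<Longrightarrow> sel c \<in> Scheds"
  obtains \<sigma> :: "nat \<Rightarrow> ('s, 'a) sched"
  where "\<And>j. \<sigma> j \<in> Scheds" "\<And>c. c \<in> C \<Longrightarrow> comb_value m q s T k c (\<sigma> (snd c)) = comb_value m q s T k c (sel c)"
proof
  let ?\<sigma> = "\<lambda>j. sched_by_start (\<lambda>s0. if (s0, j) \<in> C then sel (s0, j) else default_sched)"
  show "?\<sigma> j \<in> Scheds" for j
    by (rule sched_by_start_in_Scheds) (simp add: assms default_sched_in_Scheds)
  show "comb_value m q s T k c (?\<sigma> (snd c)) = comb_value m q s T k c (sel c)" if "c \<in> C" for c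
    by (rule comb_value_cong_sched) (simp add: sched_by_start_def that)
qed

context
  fixes m n :: nat and q :: "nat \<Rightarrow> real" and s :: "nat \<Rightarrow> 's" and T :: "nat \<Rightarrow> 's set" and k :: "nat \<Rightarrow> nat"
  assumes s_in_S: "\<forall>i\<in>{1..m}. s i \<in> S"
begin

lemma sum_comb_value_bounds:
  assumes "k ` {1..m} = {1..n}" "\<forall>j\<in>{1..n}. \<sigma> j \<in> Scheds"
  shows "(\<Sum>c\<in>Comb m s k. vmin_c S Act P m q s T k c) \<le> (\<Sum>c\<in>Comb m s k. comb_value m q s T k c (\<sigma> (snd c)))"
    and "(\<Sum>c\<in>Comb m s k. comb_value m q s T k c (\<sigma> (snd c))) \<le> (\<Sum>c\<in>Comb m s k. vmax_c S Act P m q s T k c)"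
proof -
  have "comb_value m q s T k c (\<sigma> (snd c)) \<in> {vmin_c S Act P m q s T k c..vmax_c S Act P m q s T k c}"
    if c: "c \<in> Comb m s k" for c
  proof -
    have "snd c \<in> {1..n}" using c assms(1) unfolding Comb_def by force
    then have "\<sigma> (snd c) \<in> Scheds" using assms(2) by blast
    then show ?thesis unfolding comb_value_image[OF c s_in_S, symmetric] by (rule imageI)
  qed
  then show "(\<Sum>c\<in>Comb m s k. vmin_c S Act P m q s T k c) \<le> (\<Sum>c\<in>Comb m s k. comb_value m q s T k c (\<sigma> (snd c)))"
    and "(\<Sum>c\<in>Comb m s k. comb_value m q s T k c (\<sigma> (snd c))) \<le> (\<Sum>c\<in>Comb m s k. vmax_c S Act P m q s T k c)"
    by (simp_all add: sum_mono)
qed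

lemma sum_comb_value_attains:
  assumes "(\<Sum>c\<in>Comb m s k. vmin_c S Act P m q s T k c) \<le> t" "t \<le> (\<Sum>c\<in>Comb m s k. vmax_c S Act P m q s T k c)"
  obtains \<sigma> :: "nat \<Rightarrow> ('s, 'a) sched"
  where "\<And>j. \<sigma> j \<in> Scheds" "(\<Sum>c\<in>Comb m s k. comb_value m q s T k c (\<sigma> (snd c))) = t"
proof -
  let ?C = "Comb m s k" and ?G = "comb_value m q s T k"
  let ?vmin = "vmin_c S Act P m q s T k" and ?vmax = "vmax_c S Act P m q s T k"
  have image: "?G c ` Scheds = {?vmin c..?vmax c}" if "c \<in> ?C" for c
    by (rule comb_value_image[OF that s_in_S])
  have le: "?vmin c \<le> ?vmax c" if "c \<in> ?C" for c using image[OF that] Scheds_nonempty by fastforce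
  obtain f where f: "\<And>c. c \<in> ?C \<Longrightarrow> ?vmin c \<le> f c \<and> f c \<le> ?vmax c" "sum f ?C = t"
  proof -
    have "finite ?C" unfolding Comb_def by simp
    then show thesis using sum_choice_in_intervals[of ?C ?vmin ?vmax t] le assms that by blast
  qed
  obtain sel where sel: "\<And>c. c \<in> ?C \<Longrightarrow> sel c \<in> Scheds \<and> ?G c (sel c) = f c"
    using bchoice[of ?C "\<lambda>c \<sigma>. \<sigma> \<in> Scheds \<and> ?G c \<sigma> = f c"] image f(1) by (force simp: image_iff)
  obtain \<sigma> where \<sigma>: "\<And>j. \<sigma> j \<in> Scheds" "\<And>c. c \<in> ?C \<Longrightarrow> ?G c (\<sigma> (snd c)) = ?G c (sel c)"
    using sched_family_from_comb[of ?C sel] sel by blast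
  have "(\<Sum>c\<in>?C. ?G c (\<sigma> (snd c))) = t" using \<sigma>(2) sel f(2) by simp
  with \<sigma>(1) show thesis by (rule that)
qed

end

end

theorem lemma4:
  fixes S :: "'s set" and Act :: "'a set" and P :: "'s \<Rightarrow> 'a \<Rightarrow> 's \<Rightarrow> real"
    and m n :: nat and q :: "nat \<Rightarrow> real" and s :: "nat \<Rightarrow> 's"
    and T :: "nat \<Rightarrow> 's set" and k :: "nat \<Rightarrow> nat" and \<epsilon> :: real
  assumes "is_mdp S Act P"
    and "\<forall>i\<in>{1..m+1}. q i \<in> \<rat>"
    and "\<forall>i\<in>{1..m}. s i \<in> S \<and> T i \<subseteq> S"
    and "k ` {1..m} = {1..n}"
    and "\<epsilon> \<ge> 0"
  shows "(\<exists>\<sigma> :: nat \<Rightarrow> ('s,'a) sched.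
            (\<forall>j\<in>{1..n}. \<sigma> j \<in> scheds S Act P) \<and>
            \<bar>(\<Sum>i=1..m. q i * reach_prob S Act P (\<sigma> (k i)) (s i) (T i)) - q (m+1)\<bar> \<le> \<epsilon>)
         \<longleftrightarrow>
         ((\<Sum>c\<in>Comb m s k. vmin_c S Act P m q s T k c) - \<epsilon> \<le> q (m+1) \<and>
          q (m+1) \<le> (\<Sum>c\<in>Comb m s k. vmax_c S Act P m q s T k c) + \<epsilon>)"
proof -
  interpret mdp S Act P by unfold_locales (rule assms(1))
  have s_in_S: "\<forall>i\<in>{1..m}. s i \<in> S" using assms(3) by blast
  let ?A = "\<Sum>c\<in>Comb m s k. vmin_c S Act P m q s T k c"
  let ?B = "\<Sum>c\<in>Comb m s k. vmax_c S Act P m q s T k c"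
  show ?thesis
    unfolding sum_reach_prob_eq_sum_comb_value
  proof (intro iffI; (elim exE conjE)?)
    fix \<sigma> :: "nat \<Rightarrow> ('s, 'a) sched"
    assume \<sigma>: "\<forall>j\<in>{1..n}. \<sigma> j \<in> Scheds"
      and close: "\<bar>(\<Sum>c\<in>Comb m s k. comb_value m q s T k c (\<sigma> (snd c))) - q (m + 1)\<bar> \<le> \<epsilon>"
    show "?A - \<epsilon> \<le> q (m + 1) \<and> q (m + 1) \<le> ?B + \<epsilon>"
      using sum_comb_value_bounds[where q = q and T = T, OF s_in_S assms(4) \<sigma>] close by linarith
  next
    assume bounds: "?A - \<epsilon> \<le> q (m + 1)" "q (m + 1) \<le> ?B + \<epsilon>"
    have "\<forall>j\<in>{1..n}. default_sched \<in> Scheds" by (simp add: default_sched_in_Scheds)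
    then have "?A \<le> ?B"
      using sum_comb_value_bounds[where q = q and T = T and \<sigma> = "\<lambda>_. default_sched", OF s_in_S assms(4)]
      by linarith
    define t where "t = max ?A (min ?B (q (m + 1)))"
    have t: "?A \<le> t" "t \<le> ?B" "\<bar>t - q (m + 1)\<bar> \<le> \<epsilon>"
      using \<open>?A \<le> ?B\<close> bounds assms(5) unfolding t_def by auto
    obtain \<sigma> :: "nat \<Rightarrow> ('s, 'a) sched"
      where "\<And>j. \<sigma> j \<in> Scheds" "(\<Sum>c\<in>Comb m s k. comb_value m q s T k c (\<sigma> (snd c))) = t"
      using sum_comb_value_attains[where q = q and T = T, OF s_in_S t(1,2)] by blast
    then show "\<exists>\<sigma>. (\<forall>j\<in>{1..n}. \<sigma> j \<in> Scheds) \<and>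
        \<bar>(\<Sum>c\<in>Comb m s k. comb_value m q s T k c (\<sigma> (snd c))) - q (m + 1)\<bar> \<le> \<epsilon>"
      using t(3) by blast
  qed
qed

end
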